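(* Let $\mathcal{X}$ be a set, let the side-information sets be constant, $\mathcal{X}_1=\mathcal{X}_2=\cdots=\mathcal{X}$ (independent of the history), and let $\mathcal{F}$ be a class of functions $\mathcal{X}\to[0,1]$. Then the following are equivalent: (i) the minimax regret is sublinear, i.e. $\frac1nV_n(\mathcal{F})\to0$ as $n\to\infty$; (ii) the sequential dimension $\mathrm{fat}_\beta(\mathcal{F},\mathcal{X})$ is finite for every $\beta>0$.
   Context: Logarithmic loss: $\ell(\hat y,y)=-\mathbf{1}\{y=1\}\log\hat y-\mathbf{1}\{y=0\}\log(1-\hat y)$. Minimax regret (with constant side-information set $\mathcal{X}$): $$V_n(\mathcal{F})=\sup_{x_1\in\mathcal{X}}\inf_{\hat y_1\in[0,1]}\sup_{p_1\in[0,1]}\mathbb{E}_{y_1\sim p_1}\cdots\sup_{x_n\in\mathcal{X}}\inf_{\hat y_n\in[0,1]}\sup_{p_n\in[0,1]}\mathbb{E}_{y_n\sim p_n}\Big[\sum_{t=1}^n\ell(\hat y_t,y_t)-\inf_{f\in\mathcal{F}}\sum_{t=1}^n\ell(f(x_t),y_t)\Big],$$ where $y_t\sim p_t$ is Bernoulli with $P(y_t=1)=p_t$. An $\mathcal{X}$-valued tree of depth $d$ is a sequence of maps $\mathbf{x}_t:\{0,1\}^{t-1}\to\mathcal{X}$, $t=1,\dots,d$, with $\mathbf{x}_t(y)=\mathbf{x}_t(y_1,\dots,y_{t-1})$. $\mathcal{F}$ shatters at scale $\beta>0$ an $\mathcal{X}$-valued tree $\mathbf{x}$ of depth $d$ if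 there is an $\mathbb{R}$-valued witness tree $\mathbf{s}$ of depth $d$ such that for every $y\in\{0,1\}^d$ there is $f\in\mathcal{F}$ with $(2y_t-1)(f(\mathbf{x}_t(y))-\mathbf{s}_t(y))\ge\beta/2$ for all $t=1,\dots,d$. The sequential fat-shattering dimension $\mathrm{fat}_\beta(\mathcal{F},\mathcal{X})$ is the largest depth of an $\mathcal{X}$-valued tree shattered by $\mathcal{F}$ at scale $\beta$. *)

theory Defs
  imports "HOL-Analysis.Analysis"
begin

text \<open>Logarithmic loss, extended-real valued (outcome True means y = 1).
  log 0 is taken as minus infinity, so the loss is +infinity at the endpoints.\<close>
definition logloss :: "real \<Rightarrow> bool \<Rightarrow> ereal" where
  "logloss yh y =
     (if y then (if yh = 0 then \<infinity> else ereal (- ln yh))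
      else (if yh = 1 then \<infinity> else ereal (- ln (1 - yh))))"

text \<open>Regret of a complete history (list of rounds (x_t, yhat_t, y_t)) against the class F.\<close>
definition regret :: "('a \<Rightarrow> real) set \<Rightarrow> ('a \<times> real \<times> bool) list \<Rightarrow> ereal" where
  "regret F h =
     (\<Sum>t<length h. logloss (fst (snd (h ! t))) (snd (snd (h ! t))))
     - (INF f\<in>F. \<Sum>t<length h. logloss (f (fst (h ! t))) (snd (snd (h ! t))))"

primrec game_val :: "'a set \<Rightarrow> ('a \<Rightarrow> real) set \<Rightarrow> nat \<Rightarrow> ('a \<times> real \<times> bool) list \<Rightarrow> ereal" where
  "game_val X F 0 h = regret F h"
| "game_val X F (Suc k) h =
     (SUP x\<in>X. INF yh\<in>{0..1}. SUP p\<in>{0..1}.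
        ereal p * game_val X F k (h @ [(x, yh, True)])
        + ereal (1 - p) * game_val X F k (h @ [(x, yh, False)]))"

definition minimax_regret :: "'a set \<Rightarrow> ('a \<Rightarrow> real) set \<Rightarrow> nat \<Rightarrow> ereal" where
  "minimax_regret X F n = game_val X F n []"

text \<open>Trees: an X-valued tree of depth d is a map from prefixes (y_1..y_{t-1}) to X;
  x_t(y) is represented as xt (take (t-1) y).  F shatters at scale beta.\<close>
definition seq_shatters :: "('a \<Rightarrow> real) set \<Rightarrow> 'a set \<Rightarrow> real \<Rightarrow> nat \<Rightarrow> bool" where
  "seq_shatters F X \<beta> d \<longleftrightarrow>
     (\<exists>(xt :: bool list \<Rightarrow> 'a) (st :: bool list \<Rightarrow> real).
        (\<forall>ys. length ys < d \<longrightarrow> xt ys \<in> X) \<and>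
        (\<forall>y. length y = d \<longrightarrow>
           (\<exists>f\<in>F. \<forall>t<d. (if y ! t then 1 else -1) * (f (xt (take t y)) - st (take t y)) \<ge> \<beta> / 2)))"

definition fat_finite :: "('a \<Rightarrow> real) set \<Rightarrow> 'a set \<Rightarrow> real \<Rightarrow> bool" where
  "fat_finite F X \<beta> \<longleftrightarrow> (\<exists>N. \<forall>d. seq_shatters F X \<beta> d \<longrightarrow> d \<le> N)"

end

theory Submission
  imports Defs "HOL-Real_Asymp.Real_Asymp"
begin

text \<open>If F sequentially shatters a tree of depth d at scale \<beta>, an adversary that walks down
  the tree and draws each outcome with the witness probability s_t forces the learner to pay the
  entropy of s_t per round, while the witness function of the realised path pays at least \<beta>/2
  less: the regret is at least n \<beta>/2 for n \<le> d, so an infinite dimension at some scale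
  precludes sublinear regret.

  Conversely, if fat_\<beta>(F, X) is finite, the standard optimal algorithm (SOA) at scale \<beta> errs
  by more than 3\<beta> only when it can be corrected to a grid value in a way that lowers the
  dimension of the version space, so every f \<in> F is tracked by one of at most
  ((n+1)(\<lceil>1/\<beta>\<rceil>+1))^fat_\<beta> corrected runs. A Bayesian mixture of these runs, smoothed away
  from 0 and 1, has regret at most fat_\<beta> ln((n+1)(\<lceil>1/\<beta>\<rceil>+1)) - n ln(1 - 6\<beta>), which is
  below any \<epsilon> n for small \<beta> and large n.\<close>

section \<open>Sequential shattering\<close>

lemma seq_shattersI:
  assumes "\<And>ys. length ys < d \<Longrightarrow> xt ys \<in> X"
    and "\<And>y. length y = d \<Longrightarrow>
           (\<exists>f\<in>W. \<forall>t<d. (if y ! t then 1 else -1) * (f (xt (take t y)) - st (take t y)) \<ge> \<beta> / 2)"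
  shows "seq_shatters W X \<beta> d"
  unfolding seq_shatters_def using assms by blast

lemma seq_shatters_mono:
  assumes "W \<subseteq> W'" "seq_shatters W X \<beta> d" shows "seq_shatters W' X \<beta> d"
  using assms unfolding seq_shatters_def by (metis subsetD)

lemma seq_shatters_empty: "\<not> seq_shatters {} X \<beta> d"
  unfolding seq_shatters_def by (metis empty_iff length_replicate)

lemma seq_shatters_0: assumes "W \<noteq> {}" shows "seq_shatters W X \<beta> 0"
proof (rule seq_shattersI[where xt="\<lambda>_. undefined" and st="\<lambda>_. 0"])
  show "\<exists>f\<in>W. \<forall>t<0. (if y ! t then 1 else -1) * (f undefined - 0) \<ge> \<beta> / 2" for y
    using assms by auto
qed simp

lemma seq_shatters_le:
  assumes "seq_shatters W X \<beta> d" "d' \<le> d"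
  shows "seq_shatters W X \<beta> d'"
proof -
  from assms(1) obtain xt st where X: "\<forall>ys. length ys < d \<longrightarrow> xt ys \<in> X"
    and S: "\<forall>y. length y = d \<longrightarrow>
           (\<exists>f\<in>W. \<forall>t<d. (if y ! t then 1 else -1) * (f (xt (take t y)) - st (take t y)) \<ge> \<beta> / 2)"
    unfolding seq_shatters_def by blast
  show ?thesis
  proof (rule seq_shattersI[where xt=xt and st=st])
    fix ys :: "bool list" assume "length ys < d'" then show "xt ys \<in> X" using X assms(2) by auto
  next
    fix y :: "bool list" assume ly: "length y = d'"
    define y' where "y' = y @ replicate (d - d') False"
    have "length y' = d" using ly assms(2) by (simp add: y'_def)
    then obtain f where f: "f \<in> W" "\<forall>t<d. (if y' ! t then 1 else -1) * (f (xt (take t y')) - st (take t y')) \<ge> \<beta> / 2"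
      using S by blast
    have "\<forall>t<d'. (if y ! t then 1 else -1) * (f (xt (take t y)) - st (take t y)) \<ge> \<beta> / 2"
    proof (intro allI impI)
      fix t assume t: "t < d'"
      have e: "take t y' = take t y" "y' ! t = y ! t" using t ly by (auto simp: y'_def nth_append)
      have "t < d" using t assms(2) by simp
      then have "(if y' ! t then 1 else -1) * (f (xt (take t y')) - st (take t y')) \<ge> \<beta> / 2"
        using f(2) by blast
      then show "(if y ! t then 1 else -1) * (f (xt (take t y)) - st (take t y)) \<ge> \<beta> / 2"
        unfolding e .
    qed
    then show "\<exists>f\<in>W. \<forall>t<d'. (if y ! t then 1 else -1) * (f (xt (take t y)) - st (take t y)) \<ge> \<beta> / 2"
      using f(1) by blast
  qed
qed

lemma seq_shatters_Suc:
  assumes x: "x \<in> X"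
    and Lo: "seq_shatters Lo X \<beta> d" and Up: "seq_shatters Up X \<beta> d"
    and LoW: "\<And>g. g \<in> Lo \<Longrightarrow> g \<in> W \<and> g x \<le> v"
    and UpW: "\<And>g. g \<in> Up \<Longrightarrow> g \<in> W \<and> g x \<ge> v + \<beta>"
  shows "seq_shatters W X \<beta> (Suc d)"
proof -
  from Lo obtain xL sL where XL: "\<forall>ys. length ys < d \<longrightarrow> xL ys \<in> X"
    and SL: "\<forall>y. length y = d \<longrightarrow>
           (\<exists>f\<in>Lo. \<forall>t<d. (if y ! t then 1 else -1) * (f (xL (take t y)) - sL (take t y)) \<ge> \<beta> / 2)"
    unfolding seq_shatters_def by blast
  from Up obtain xU sU where XU: "\<forall>ys. length ys < d \<longrightarrow> xU ys \<in> X"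
    and SU: "\<forall>y. length y = d \<longrightarrow>
           (\<exists>f\<in>Up. \<forall>t<d. (if y ! t then 1 else -1) * (f (xU (take t y)) - sU (take t y)) \<ge> \<beta> / 2)"
    unfolding seq_shatters_def by blast
  define xt where "xt ys = (if ys = [] then x else if hd ys then xU (tl ys) else xL (tl ys))" for ys
  define st where "st ys = (if ys = [] then v + \<beta>/2 else if hd ys then sU (tl ys) else sL (tl ys))" for ys
  show ?thesis
  proof (rule seq_shattersI[where xt=xt and st=st])
    fix ys :: "bool list" assume "length ys < Suc d" then show "xt ys \<in> X"
      using XL XU x by (cases ys) (auto simp: xt_def)
  next
    fix y :: "bool list" assume ly: "length y = Suc d"
    then obtain b y' where y: "y = b # y'" and ly': "length y' = d" by (cases y) auto
    show "\<exists>f\<in>W. \<forall>t<Suc d. (if y ! t then 1 else -1) * (f (xt (take t y)) - st (take t y)) \<ge> \<beta> / 2"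
    proof (cases b)
      case True
      then obtain f where f: "f \<in> Up" "\<forall>t<d. (if y' ! t then 1 else -1) * (f (xU (take t y')) - sU (take t y')) \<ge> \<beta> / 2"
        using SU ly' by blast
      have "\<forall>t<Suc d. (if y ! t then 1 else -1) * (f (xt (take t y)) - st (take t y)) \<ge> \<beta> / 2"
      proof (intro allI impI)
        fix t assume t: "t < Suc d"
        show "(if y ! t then 1 else -1) * (f (xt (take t y)) - st (take t y)) \<ge> \<beta> / 2"
        proof (cases t)
          case 0 then show ?thesis using UpW[OF f(1)] True y by (simp add: xt_def st_def)
        next
          case (Suc t') then show ?thesis using f(2) t True y by (simp add: xt_def st_def)
        qed
      qed
      then show ?thesis using UpW[OF f(1)] by blast
    next
      case False
      then obtain f where f: "f \<in> Lo" "\<forall>t<d. (if y' ! t then 1 else -1) * (f (xL (take t y')) - sL (take t y')) \<ge> \<beta> / 2"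
        using SL ly' by blast
      have "\<forall>t<Suc d. (if y ! t then 1 else -1) * (f (xt (take t y)) - st (take t y)) \<ge> \<beta> / 2"
      proof (intro allI impI)
        fix t assume t: "t < Suc d"
        show "(if y ! t then 1 else -1) * (f (xt (take t y)) - st (take t y)) \<ge> \<beta> / 2"
        proof (cases t)
          case 0 then show ?thesis using LoW[OF f(1)] False y by (simp add: xt_def st_def)
        next
          case (Suc t') then show ?thesis using f(2) t False y by (simp add: xt_def st_def)
        qed
      qed
      then show ?thesis using LoW[OF f(1)] by blast
    qed
  qed
qed

lemma seq_shatters_node:
  fixes F :: "('a \<Rightarrow> real) set"
  assumes ST: "\<forall>y. length y = d \<longrightarrow>
           (\<exists>f\<in>F. \<forall>t<d. (if y ! t then 1 else -1) * (f (xt (take t y)) - st (take t y)) \<ge> \<beta> / 2)"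
    and ys: "length ys < d"
  obtains f where "f \<in> F" "(if b then 1 else -1) * (f (xt ys) - st ys) \<ge> \<beta> / 2"
proof -
  let ?y = "ys @ b # replicate (d - length ys - 1) False"
  have "length ?y = d" using ys by simp
  then obtain f where "f \<in> F"
    and f: "\<forall>t<d. (if ?y ! t then 1 else -1) * (f (xt (take t ?y)) - st (take t ?y)) \<ge> \<beta> / 2"
    using ST by blast
  have "take (length ys) ?y = ys" "?y ! length ys = b" by simp_all
  with f[rule_format, OF ys] have "(if b then 1 else -1) * (f (xt ys) - st ys) \<ge> \<beta> / 2" by simp
  then show thesis using that \<open>f \<in> F\<close> by blast
qed

lemma seq_shatters_witness_bounds:
  fixes F :: "('a \<Rightarrow> real) set"
  assumes rng: "\<forall>f\<in>F. \<forall>x\<in>X. 0 \<le> f x \<and> f x \<le> 1"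
    and XT: "\<forall>ys. length ys < d \<longrightarrow> xt ys \<in> X"
    and ST: "\<forall>y. length y = d \<longrightarrow>
           (\<exists>f\<in>F. \<forall>t<d. (if y ! t then 1 else -1) * (f (xt (take t y)) - st (take t y)) \<ge> \<beta> / 2)"
    and ys: "length ys < d"
  shows "\<beta>/2 \<le> st ys \<and> st ys \<le> 1 - \<beta>/2"
proof -
  obtain f1 where f1: "f1 \<in> F" "f1 (xt ys) - st ys \<ge> \<beta>/2"
    using seq_shatters_node[OF ST ys, of True] by auto
  obtain f2 where f2: "f2 \<in> F" "st ys - f2 (xt ys) \<ge> \<beta>/2"
    using seq_shatters_node[OF ST ys, of False] by auto
  have "f1 (xt ys) \<le> 1" "0 \<le> f2 (xt ys)" using rng f1(1) f2(1) XT ys by auto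
  then show ?thesis using f1(2) f2(2) by linarith
qed

text \<open>Only meaningful when the depths of shattered trees are bounded and W \<noteq> {} (so that
  depth 0 is shattered); otherwise GREATEST is unspecified.\<close>

definition fat_dim :: "('a \<Rightarrow> real) set \<Rightarrow> 'a set \<Rightarrow> real \<Rightarrow> nat" where
  "fat_dim W X \<beta> = (GREATEST d. seq_shatters W X \<beta> d)"

lemma fat_finite_bounded:
  assumes "fat_finite F X \<beta>" "W \<subseteq> F"
  obtains N where "\<And>d. seq_shatters W X \<beta> d \<Longrightarrow> d \<le> N"
proof -
  from assms(1) obtain N where N: "\<forall>d. seq_shatters F X \<beta> d \<longrightarrow> d \<le> N"
    unfolding fat_finite_def by blast
  show ?thesis
    by (rule that[of N]) (use N seq_shatters_mono[OF assms(2)] in blast)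
qed

lemma seq_shatters_fat_dim:
  assumes "fat_finite F X \<beta>" "W \<subseteq> F" "W \<noteq> {}"
  shows "seq_shatters W X \<beta> (fat_dim W X \<beta>)"
proof -
  obtain N where N: "\<And>d. seq_shatters W X \<beta> d \<Longrightarrow> d \<le> N" using fat_finite_bounded[OF assms(1,2)] by blast
  show ?thesis unfolding fat_dim_def
    by (rule GreatestI_nat[where P="\<lambda>d. seq_shatters W X \<beta> d", OF seq_shatters_0[OF assms(3)]]) (use N in blast)
qed

lemma fat_dim_ge:
  assumes "fat_finite F X \<beta>" "W \<subseteq> F" "seq_shatters W X \<beta> d"
  shows "d \<le> fat_dim W X \<beta>"
proof -
  obtain N where N: "\<And>d. seq_shatters W X \<beta> d \<Longrightarrow> d \<le> N" using fat_finite_bounded[OF assms(1,2)] by blast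
  show ?thesis unfolding fat_dim_def
    by (rule Greatest_le_nat[where P="\<lambda>d. seq_shatters W X \<beta> d", OF assms(3)]) (use N in blast)
qed

lemma fat_dim_less:
  assumes "fat_finite F X \<beta>" "W \<subseteq> F" "W \<noteq> {}" "\<not> seq_shatters W X \<beta> k"
  shows "fat_dim W X \<beta> < k"
proof (rule ccontr)
  assume "\<not> fat_dim W X \<beta> < k"
  then have "k \<le> fat_dim W X \<beta>" by simp
  with seq_shatters_le[OF seq_shatters_fat_dim[OF assms(1-3)]] assms(4) show False by blast
qed

section \<open>Corrected runs of the standard optimal algorithm\<close>

definition soa_level :: "('a \<Rightarrow> real) set \<Rightarrow> 'a set \<Rightarrow> real \<Rightarrow> 'a \<Rightarrow> real" where
  "soa_level W X \<beta> x = \<beta> * real (GREATEST j. j \<le> nat \<lceil>1/\<beta>\<rceil> \<and>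
      seq_shatters {g\<in>W. \<beta> * real j \<le> g x} X \<beta> (fat_dim W X \<beta>))"

lemma soa_level_props:
  assumes fat: "fat_finite F X \<beta>" and b: "\<beta> > 0"
    and rng: "\<forall>f\<in>F. \<forall>x\<in>X. 0 \<le> f x \<and> f x \<le> 1"
    and W: "W \<subseteq> F" "W \<noteq> {}" and x: "x \<in> X"
  shows "0 \<le> soa_level W X \<beta> x"
    "\<not> seq_shatters {g\<in>W. soa_level W X \<beta> x + \<beta> \<le> g x} X \<beta> (fat_dim W X \<beta>)"
    "\<not> seq_shatters {g\<in>W. g x \<le> soa_level W X \<beta> x - \<beta>} X \<beta> (fat_dim W X \<beta>)"
proof -
  define J where "J = nat \<lceil>1/\<beta>\<rceil>"
  define D where "D = fat_dim W X \<beta>"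
  define P where "P j \<longleftrightarrow> j \<le> J \<and> seq_shatters {g\<in>W. \<beta> * real j \<le> g x} X \<beta> D" for j
  define js where "js = (GREATEST j. P j)"
  have soa_eq: "soa_level W X \<beta> x = \<beta> * real js"
    unfolding soa_level_def js_def P_def J_def D_def by simp
  have W0: "{g\<in>W. \<beta> * real 0 \<le> g x} = W" using rng W x by auto
  have P0: "P 0" unfolding P_def D_def W0 using seq_shatters_fat_dim[OF fat W] by simp
  have Pjs: "P js" unfolding js_def by (rule GreatestI_nat[where P=P, OF P0]) (auto simp: P_def)
  have Pge: "\<And>j. P j \<Longrightarrow> j \<le> js" unfolding js_def by (rule Greatest_le_nat[where P=P]) (auto simp: P_def)
  show "0 \<le> soa_level W X \<beta> x" using b soa_eq by simp
  show up: "\<not> seq_shatters {g\<in>W. soa_level W X \<beta> x + \<beta> \<le> g x} X \<beta> (fat_dim W X \<beta>)"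
  proof
    assume sh: "seq_shatters {g\<in>W. soa_level W X \<beta> x + \<beta> \<le> g x} X \<beta> (fat_dim W X \<beta>)"
    have eq: "soa_level W X \<beta> x + \<beta> = \<beta> * real (Suc js)" using soa_eq by (simp add: algebra_simps)
    show False
    proof (cases "Suc js \<le> J")
      case True
      then have "P (Suc js)" using sh unfolding P_def D_def eq by simp
      then show False using Pge by fastforce
    next
      case False
      then have "js = J" using Pjs unfolding P_def by simp
      have "1/\<beta> \<le> real J" unfolding J_def by linarith
      then have "1 \<le> \<beta> * real J" using b by (simp add: field_simps)
      then have "1 < \<beta> * real (Suc js)" using b \<open>js = J\<close> by (simp add: algebra_simps)
      then have "{g\<in>W. soa_level W X \<beta> x + \<beta> \<le> g x} = {}" using rng W x eq by fastforce
      then show False using sh seq_shatters_empty by metis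
    qed
  qed
  show "\<not> seq_shatters {g\<in>W. g x \<le> soa_level W X \<beta> x - \<beta>} X \<beta> (fat_dim W X \<beta>)"
  proof
    assume sh: "seq_shatters {g\<in>W. g x \<le> soa_level W X \<beta> x - \<beta>} X \<beta> (fat_dim W X \<beta>)"
    have shu: "seq_shatters {g\<in>W. \<beta> * real js \<le> g x} X \<beta> (fat_dim W X \<beta>)"
      using Pjs unfolding P_def D_def by simp
    have "seq_shatters W X \<beta> (Suc (fat_dim W X \<beta>))"
      by (rule seq_shatters_Suc[OF x sh shu, where v="soa_level W X \<beta> x - \<beta>"]) (auto simp: soa_eq)
    then have "Suc (fat_dim W X \<beta>) \<le> fat_dim W X \<beta>" using fat_dim_ge[OF fat W(1)] by blast
    then show False by simp
  qed
qed

text \<open>A corrected run is given by a partial map m: m i = Some k corrects round i to the grid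
  value \<beta> k.\<close>

definition version_space :: "('a \<Rightarrow> real) set \<Rightarrow> real \<Rightarrow> (nat \<Rightarrow> nat option) \<Rightarrow> 'a list \<Rightarrow> ('a \<Rightarrow> real) set" where
  "version_space F \<beta> m xs = {g\<in>F. \<forall>i<length xs. \<forall>k. m i = Some k \<longrightarrow> \<bar>g (xs!i) - \<beta> * real k\<bar> \<le> \<beta>}"

definition soa_predict :: "('a \<Rightarrow> real) set \<Rightarrow> 'a set \<Rightarrow> real \<Rightarrow> (nat \<Rightarrow> nat option) \<Rightarrow> 'a list \<Rightarrow> 'a \<Rightarrow> real" where
  "soa_predict F X \<beta> m xs x = min 1 (case m (length xs) of Some k \<Rightarrow> \<beta> * real k
      | None \<Rightarrow> soa_level (version_space F \<beta> m xs) X \<beta> x)"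

lemma version_space_cong: "(\<And>j. j < length xs \<Longrightarrow> m j = m' j) \<Longrightarrow> version_space F \<beta> m xs = version_space F \<beta> m' xs"
  unfolding version_space_def by auto

lemma soa_predict_cong: "(\<And>j. j \<le> length xs \<Longrightarrow> m j = m' j) \<Longrightarrow> soa_predict F X \<beta> m xs x = soa_predict F X \<beta> m' xs x"
proof -
  assume a: "\<And>j. j \<le> length xs \<Longrightarrow> m j = m' j"
  then have "version_space F \<beta> m xs = version_space F \<beta> m' xs" by (intro version_space_cong) simp
  moreover have "m (length xs) = m' (length xs)" using a by simp
  ultimately show ?thesis unfolding soa_predict_def by (simp only:)
qed

lemma version_space_subset: "version_space F \<beta> m xs \<subseteq> F" unfolding version_space_def by auto

lemma soa_predict_range:
  assumes "\<beta> > 0"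
  shows "0 \<le> soa_predict F X \<beta> m xs x \<and> soa_predict F X \<beta> m xs x \<le> 1"
  using assms unfolding soa_predict_def soa_level_def by (auto split: option.split)

lemma grid_point_below:
  assumes b: "0 < \<beta>" and v: "0 \<le> v" "v \<le> 1"
  obtains k :: nat where "k \<le> nat \<lceil>1/\<beta>\<rceil>" "\<beta> * real k \<le> v" "v < \<beta> * real k + \<beta>"
proof
  define k where "k = nat \<lfloor>v / \<beta>\<rfloor>"
  have k: "real k = of_int \<lfloor>v / \<beta>\<rfloor>" using v b unfolding k_def by simp
  have "of_int \<lfloor>v / \<beta>\<rfloor> \<le> v / \<beta>" "v / \<beta> < of_int \<lfloor>v / \<beta>\<rfloor> + 1" by linarith+
  then have "of_int \<lfloor>v / \<beta>\<rfloor> * \<beta> \<le> v" "v < (of_int \<lfloor>v / \<beta>\<rfloor> + 1) * \<beta>"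
    using b by (simp_all only: pos_le_divide_eq pos_divide_less_eq)
  then show "\<beta> * real k \<le> v" "v < \<beta> * real k + \<beta>" unfolding k by (simp_all add: algebra_simps)
  have "v / \<beta> \<le> 1 / \<beta>" using v b by (simp add: divide_right_mono)
  then show "k \<le> nat \<lceil>1/\<beta>\<rceil>" unfolding k_def by linarith
qed

text \<open>If the SOA prediction misses f x by more than 3\<beta>, then the functions that agree with
  f x up to 2\<beta> all lie on one side of the SOA level by at least \<beta>, so they shatter
  strictly shallower trees.\<close>
lemma soa_mistake_lowers_fat_dim:
  assumes fat: "fat_finite F X \<beta>" and b: "\<beta> > 0"
    and rng: "\<forall>f\<in>F. \<forall>x\<in>X. 0 \<le> f x \<and> f x \<le> 1"
    and V: "V \<subseteq> F" and f: "f \<in> V" and x: "x \<in> X"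
    and miss: "3 * \<beta> < \<bar>min 1 (soa_level V X \<beta> x) - f x\<bar>"
    and k: "\<bar>f x - \<beta> * real k\<bar> \<le> \<beta>"
  shows "fat_dim {g\<in>V. \<bar>g x - \<beta> * real k\<bar> \<le> \<beta>} X \<beta> < fat_dim V X \<beta>"
proof -
  let ?r = "soa_level V X \<beta> x" and ?V' = "{g\<in>V. \<bar>g x - \<beta> * real k\<bar> \<le> \<beta>}"
  have Vne: "V \<noteq> {}" using f by auto
  have fx: "0 \<le> f x" "f x \<le> 1" using rng f V x by auto
  have close: "\<bar>g x - f x\<bar> \<le> 2 * \<beta>" if "g \<in> ?V'" for g using that k by auto
  have notsh: "\<not> seq_shatters ?V' X \<beta> (fat_dim V X \<beta>)"
  proof (cases "f x > min 1 ?r + 3 * \<beta>")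
    case True
    then have "min 1 ?r < 1" using fx b by linarith
    then have "min 1 ?r = ?r" by simp
    have "?V' \<subseteq> {g\<in>V. ?r + \<beta> \<le> g x}"
    proof
      fix g assume g: "g \<in> ?V'"
      then have "?r + \<beta> \<le> g x" using close[OF g] True \<open>min 1 ?r = ?r\<close> unfolding abs_le_iff by linarith
      then show "g \<in> {g\<in>V. ?r + \<beta> \<le> g x}" using g by simp
    qed
    then show ?thesis using soa_level_props(2)[OF fat b rng V Vne x] seq_shatters_mono by blast
  next
    case False
    have "min 1 ?r \<le> ?r" by simp
    have "?V' \<subseteq> {g\<in>V. g x \<le> ?r - \<beta>}"
    proof
      fix g assume g: "g \<in> ?V'"
      then have "g x \<le> ?r - \<beta>"
        using close[OF g] False miss \<open>min 1 ?r \<le> ?r\<close> unfolding abs_le_iff abs_less_iff by linarith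
      then show "g \<in> {g\<in>V. g x \<le> ?r - \<beta>}" using g by simp
    qed
    then show ?thesis using soa_level_props(3)[OF fat b rng V Vne x] seq_shatters_mono by blast
  qed
  have "f \<in> ?V'" using f k by simp
  then show ?thesis using V by (intro fat_dim_less[OF fat _ _ notsh]) auto
qed

text \<open>Every f in F is tracked to within 3\<beta> by the SOA that is corrected at the rounds in
  dom m to the grid value \<beta> k nearest below f; each correction lowers the dimension of the
  version space, so at most fat_dim F X \<beta> corrections are needed.\<close>
lemma soa_expert_exists:
  assumes fat: "fat_finite F X \<beta>" and b: "\<beta> > 0"
    and rng: "\<forall>f\<in>F. \<forall>x\<in>X. 0 \<le> f x \<and> f x \<le> 1"
    and f: "f \<in> F" and xs: "set xs \<subseteq> X" and t: "t \<le> length xs"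
  shows "\<exists>m. dom m \<subseteq> {..<t} \<and> ran m \<subseteq> {..nat \<lceil>1/\<beta>\<rceil>} \<and>
     f \<in> version_space F \<beta> m (take t xs) \<and>
     card (dom m) + fat_dim (version_space F \<beta> m (take t xs)) X \<beta> \<le> fat_dim F X \<beta> \<and>
     (\<forall>i<t. \<bar>soa_predict F X \<beta> m (take i xs) (xs!i) - f (xs!i)\<bar> \<le> 3*\<beta>)"
  using t
proof (induction t)
  case 0
  have "version_space F \<beta> Map.empty (take 0 xs) = F" unfolding version_space_def by simp
  then show ?case using f by (intro exI[of _ Map.empty]) simp
next
  case (Suc t)
  then have tl: "t < length xs" by simp
  from Suc.IH tl obtain m where dom: "dom m \<subseteq> {..<t}" and ran: "ran m \<subseteq> {..nat \<lceil>1/\<beta>\<rceil>}"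
    and fV: "f \<in> version_space F \<beta> m (take t xs)"
    and cd: "card (dom m) + fat_dim (version_space F \<beta> m (take t xs)) X \<beta> \<le> fat_dim F X \<beta>"
    and pr: "\<forall>i<t. \<bar>soa_predict F X \<beta> m (take i xs) (xs!i) - f (xs!i)\<bar> \<le> 3*\<beta>" by auto
  define x where "x = xs ! t"
  define V where "V = version_space F \<beta> m (take t xs)"
  have xX: "x \<in> X" using xs tl unfolding x_def by (meson nth_mem subsetD)
  have tk: "take (Suc t) xs = take t xs @ [x]" using tl by (simp add: x_def take_Suc_conv_app_nth)
  have mt: "m t = None" using dom by auto
  have lt: "length (take t xs) = t" using tl by simp
  have prt: "soa_predict F X \<beta> m (take t xs) x = min 1 (soa_level V X \<beta> x)"
    unfolding soa_predict_def V_def lt mt by simp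
  show ?case
  proof (cases "\<bar>min 1 (soa_level V X \<beta> x) - f x\<bar> \<le> 3*\<beta>")
    case True
    have "version_space F \<beta> m (take (Suc t) xs) = V"
      unfolding V_def version_space_def tk using mt tl by (auto simp: nth_append less_Suc_eq min_def)
    then show ?thesis
      using dom ran fV cd pr True prt V_def by (intro exI[of _ m]) (auto simp: less_Suc_eq x_def)
  next
    case False
    have fx: "0 \<le> f x" "f x \<le> 1" using rng f xX by auto
    obtain k where kJ: "k \<le> nat \<lceil>1/\<beta>\<rceil>" and k1: "\<beta> * real k \<le> f x" "f x < \<beta> * real k + \<beta>"
      using grid_point_below[OF b fx] .
    define m' where "m' = m(t \<mapsto> k)"
    have agree: "\<And>j. j < t \<Longrightarrow> m' j = m j" unfolding m'_def by simp
    define V' where "V' = {g\<in>V. \<bar>g x - \<beta> * real k\<bar> \<le> \<beta>}"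
    have V'eq: "version_space F \<beta> m' (take (Suc t) xs) = V'"
    proof -
      have "version_space F \<beta> m' (take t xs) = V" unfolding V_def by (rule version_space_cong) (simp add: agree)
      then show ?thesis unfolding V'_def tk
        using tl by (auto simp: version_space_def nth_append less_Suc_eq m'_def lt min_absorb2)
    qed
    have Dl: "fat_dim V' X \<beta> < fat_dim V X \<beta>" unfolding V'_def
      by (rule soa_mistake_lowers_fat_dim[OF fat b rng _ _ xX])
        (use False k1 fV in \<open>auto simp: V_def version_space_subset\<close>)
    have "finite (dom m)" using dom finite_subset by blast
    then have cd': "card (dom m') = Suc (card (dom m))" unfolding m'_def using mt by (simp add: domIff)
    have pred_t: "soa_predict F X \<beta> m' (take t xs) x = \<beta> * real k"
      unfolding soa_predict_def lt m'_def using k1 fx by simp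
    show ?thesis
    proof (intro exI[of _ m'] conjI)
      show "dom m' \<subseteq> {..<Suc t}" using dom unfolding m'_def by auto
      show "ran m' \<subseteq> {..nat \<lceil>1/\<beta>\<rceil>}" using ran kJ mt unfolding m'_def by (auto simp: ran_def)
      show "f \<in> version_space F \<beta> m' (take (Suc t) xs)" using fV k1 V'eq by (simp add: V'_def V_def)
      show "card (dom m') + fat_dim (version_space F \<beta> m' (take (Suc t) xs)) X \<beta> \<le> fat_dim F X \<beta>"
        using cd cd' Dl V'eq V_def by simp
      show "\<forall>i<Suc t. \<bar>soa_predict F X \<beta> m' (take i xs) (xs!i) - f (xs!i)\<bar> \<le> 3*\<beta>"
      proof (intro allI impI)
        fix i assume i: "i < Suc t"
        show "\<bar>soa_predict F X \<beta> m' (take i xs) (xs!i) - f (xs!i)\<bar> \<le> 3*\<beta>"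
        proof (cases "i < t")
          case True
          have "soa_predict F X \<beta> m' (take i xs) (xs!i) = soa_predict F X \<beta> m (take i xs) (xs!i)"
            by (rule soa_predict_cong) (use True tl agree in auto)
          then show ?thesis using pr True by simp
        next
          case False
          then have "i = t" using i by simp
          then show ?thesis using pred_t k1 b by (simp add: x_def)
        qed
      qed
    qed
  qed
qed

text \<open>The corrections are encoded as an association list, padded to length fat_dim F X \<beta>
  with entries for the never-consulted round n, so that the experts range over a set of known
  cardinality.\<close>

lemma soa_expert_list:
  assumes fat: "fat_finite F X \<beta>" and b: "\<beta> > 0"
    and rng: "\<forall>f\<in>F. \<forall>x\<in>X. 0 \<le> f x \<and> f x \<le> 1"
    and f: "f \<in> F" and xs: "set xs \<subseteq> X" and n: "length xs = n"
  shows "\<exists>L. set L \<subseteq> {..n} \<times> {..nat \<lceil>1/\<beta>\<rceil>} \<and> length L = fat_dim F X \<beta> \<and>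
     (\<forall>t<n. \<bar>soa_predict F X \<beta> (map_of L) (take t xs) (xs!t) - f (xs!t)\<bar> \<le> 3*\<beta>)"
proof -
  obtain m where dom: "dom m \<subseteq> {..<n}" and ran: "ran m \<subseteq> {..nat \<lceil>1/\<beta>\<rceil>}"
    and cd: "card (dom m) + fat_dim (version_space F \<beta> m (take n xs)) X \<beta> \<le> fat_dim F X \<beta>"
    and pr: "\<forall>i<n. \<bar>soa_predict F X \<beta> m (take i xs) (xs!i) - f (xs!i)\<bar> \<le> 3*\<beta>"
    using soa_expert_exists[OF fat b rng f xs, of n] n by auto
  have finD: "finite (dom m)" using dom finite_subset by blast
  define L1 where "L1 = map (\<lambda>k. (k, the (m k))) (sorted_list_of_set (dom m))"
  define L where "L = L1 @ replicate (fat_dim F X \<beta> - card (dom m)) (n, 0::nat)"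
  have mL1: "map_of L1 = m" unfolding L1_def by (rule map_of_map_keys) (simp add: finD)
  have agree: "map_of L j = m j" if "j < n" for j
  proof -
    have "map_of (replicate q (n, 0::nat)) j = None" for q
      using that by (induction q) auto
    then show ?thesis unfolding L_def map_of_append mL1 by (simp add: map_add_def split: option.split)
  qed
  have setL: "set L \<subseteq> {..n} \<times> {..nat \<lceil>1/\<beta>\<rceil>}"
  proof -
    have "set L1 \<subseteq> {..n} \<times> {..nat \<lceil>1/\<beta>\<rceil>}"
    proof
      fix p assume "p \<in> set L1"
      then obtain k where k: "k \<in> dom m" "p = (k, the (m k))" unfolding L1_def using finD by auto
      then have "the (m k) \<in> ran m" by (auto simp: ran_def)
      then show "p \<in> {..n} \<times> {..nat \<lceil>1/\<beta>\<rceil>}" using k dom ran by auto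
    qed
    then show ?thesis unfolding L_def by auto
  qed
  have lenL: "length L = fat_dim F X \<beta>"
    unfolding L_def L1_def using cd finD by simp
  have "\<forall>t<n. \<bar>soa_predict F X \<beta> (map_of L) (take t xs) (xs!t) - f (xs!t)\<bar> \<le> 3*\<beta>"
  proof (intro allI impI)
    fix t assume t: "t < n"
    have "soa_predict F X \<beta> (map_of L) (take t xs) (xs!t) = soa_predict F X \<beta> m (take t xs) (xs!t)"
      by (rule soa_predict_cong) (use t n agree in auto)
    then show "\<bar>soa_predict F X \<beta> (map_of L) (take t xs) (xs!t) - f (xs!t)\<bar> \<le> 3*\<beta>" using pr t by simp
  qed
  then show ?thesis using setL lenL by blast
qed

section \<open>Bayesian mixtures of experts\<close>

definition bernoulli_prob :: "real \<Rightarrow> bool \<Rightarrow> real" where "bernoulli_prob q y = (if y then q else 1 - q)"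

lemma logloss_bernoulli_prob: "logloss q y = (if bernoulli_prob q y = 0 then \<infinity> else ereal (- ln (bernoulli_prob q y)))"
  unfolding logloss_def bernoulli_prob_def by auto

type_synonym 'a hist = "('a \<times> real \<times> bool) list"

definition expert_weight :: "('i \<Rightarrow> 'a hist \<Rightarrow> 'a \<Rightarrow> real) \<Rightarrow> 'i \<Rightarrow> 'a hist \<Rightarrow> real" where
  "expert_weight ep L h = (\<Prod>i<length h. bernoulli_prob (ep L (take i h) (fst (h!i))) (snd (snd (h!i))))"

definition mixture_forecast :: "'i set \<Rightarrow> ('i \<Rightarrow> 'a hist \<Rightarrow> 'a \<Rightarrow> real) \<Rightarrow> 'a hist \<Rightarrow> 'a \<Rightarrow> real" where
  "mixture_forecast I ep h x = (\<Sum>L\<in>I. expert_weight ep L h * ep L h x) / (\<Sum>L\<in>I. expert_weight ep L h)"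

text \<open>Experts forecast within [c, 1 - c]; the mixture forecast is their posterior mean under the
  uniform prior, so the product of its outcome probabilities telescopes to the average expert
  likelihood, and its log-loss exceeds that of any expert by at most ln |I|.\<close>

locale expert_mixture =
  fixes I :: "'i set" and ep :: "'i \<Rightarrow> 'a hist \<Rightarrow> 'a \<Rightarrow> real" and c :: real
  assumes fin: "finite I" and ne: "I \<noteq> {}" and c: "0 < c"
    and rng: "\<And>L h x. c \<le> ep L h x \<and> ep L h x \<le> 1 - c"
begin

lemma bernoulli_prob_pos: "0 < bernoulli_prob (ep L h x) y"
  using rng[of L h x] c unfolding bernoulli_prob_def by auto

lemma expert_weight_pos: "0 < expert_weight ep L h"
  unfolding expert_weight_def by (rule prod_pos) (simp add: bernoulli_prob_pos)

lemma expert_weight_snoc: "expert_weight ep L (h @ [(x, yh, y)]) = expert_weight ep L h * bernoulli_prob (ep L h x) y"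
  unfolding expert_weight_def by (simp add: nth_append)

lemma sum_expert_weight_pos: "0 < (\<Sum>L\<in>I. expert_weight ep L h)"
  using fin ne by (intro sum_pos) (auto simp: expert_weight_pos)

lemma mixture_forecast_range: "c \<le> mixture_forecast I ep h x \<and> mixture_forecast I ep h x \<le> 1 - c"
proof -
  let ?S = "\<Sum>L\<in>I. expert_weight ep L h"
  have "(\<Sum>L\<in>I. expert_weight ep L h * c) \<le> (\<Sum>L\<in>I. expert_weight ep L h * ep L h x)"
    by (intro sum_mono mult_left_mono) (auto simp: rng less_imp_le[OF expert_weight_pos])
  moreover have "(\<Sum>L\<in>I. expert_weight ep L h * ep L h x) \<le> (\<Sum>L\<in>I. expert_weight ep L h * (1 - c))"
    by (intro sum_mono mult_left_mono) (auto simp: rng less_imp_le[OF expert_weight_pos])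
  ultimately have a: "?S * c \<le> (\<Sum>L\<in>I. expert_weight ep L h * ep L h x)"
    "(\<Sum>L\<in>I. expert_weight ep L h * ep L h x) \<le> ?S * (1 - c)"
    by (simp_all add: sum_distrib_right)
  show ?thesis unfolding mixture_forecast_def using a sum_expert_weight_pos
    by (simp add: pos_le_divide_eq pos_divide_le_eq mult.commute)
qed

lemma bernoulli_prob_mixture: "bernoulli_prob (mixture_forecast I ep h x) y = (\<Sum>L\<in>I. expert_weight ep L (h @ [(x, yh, y)])) / (\<Sum>L\<in>I. expert_weight ep L h)"
proof (cases y)
  case True
  then show ?thesis unfolding bernoulli_prob_def mixture_forecast_def by (simp add: expert_weight_snoc bernoulli_prob_def)
next
  case False
  have "(\<Sum>L\<in>I. expert_weight ep L (h @ [(x, yh, y)])) = (\<Sum>L\<in>I. expert_weight ep L h) - (\<Sum>L\<in>I. expert_weight ep L h * ep L h x)"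
    using False by (simp add: expert_weight_snoc bernoulli_prob_def algebra_simps sum_subtractf)
  then show ?thesis using sum_expert_weight_pos[of h] unfolding bernoulli_prob_def mixture_forecast_def using False
    by (simp add: diff_divide_distrib)
qed

lemma prod_mixture_prob:
  "(\<Prod>i<length h. bernoulli_prob (mixture_forecast I ep (take i h) (fst (h!i))) (snd (snd (h!i))))
     = (\<Sum>L\<in>I. expert_weight ep L h) / real (card I)"
proof (induction h rule: rev_induct)
  case Nil
  have "card I > 0" using fin ne by (simp add: card_gt_0_iff)
  then show ?case by (simp add: expert_weight_def)
next
  case (snoc a h)
  obtain x yh y where a: "a = (x, yh, y)" by (cases a) auto
  have "(\<Prod>i<length (h @ [a]). bernoulli_prob (mixture_forecast I ep (take i (h @ [a])) (fst ((h @ [a])!i))) (snd (snd ((h @ [a])!i))))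
      = (\<Prod>i<length h. bernoulli_prob (mixture_forecast I ep (take i h) (fst (h!i))) (snd (snd (h!i)))) * bernoulli_prob (mixture_forecast I ep h x) y"
    by (simp add: a nth_append)
  also have "\<dots> = (\<Sum>L\<in>I. expert_weight ep L h) / real (card I) * ((\<Sum>L\<in>I. expert_weight ep L (h @ [(x, yh, y)])) / (\<Sum>L\<in>I. expert_weight ep L h))"
    using snoc.IH bernoulli_prob_mixture[of h x y yh] by simp
  also have "\<dots> = (\<Sum>L\<in>I. expert_weight ep L (h @ [a])) / real (card I)"
    using sum_expert_weight_pos[of h] by (simp add: a)
  finally show ?case .
qed

lemma mixture_loss_le:
  assumes L: "L \<in> I"
  shows "(\<Sum>i<length h. - ln (bernoulli_prob (mixture_forecast I ep (take i h) (fst (h!i))) (snd (snd (h!i)))))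
     \<le> ln (real (card I)) + (\<Sum>i<length h. - ln (bernoulli_prob (ep L (take i h) (fst (h!i))) (snd (snd (h!i)))))"
proof -
  have cI: "real (card I) > 0" using fin ne by (simp add: card_gt_0_iff)
  have sp: "\<And>i. 0 < bernoulli_prob (mixture_forecast I ep (take i h) (fst (h!i))) (snd (snd (h!i)))"
    using mixture_forecast_range c unfolding bernoulli_prob_def by (auto simp: le_diff_eq) (smt (verit, best) mixture_forecast_range)+
  have "(\<Sum>i<length h. - ln (bernoulli_prob (mixture_forecast I ep (take i h) (fst (h!i))) (snd (snd (h!i)))))
      = - ln (\<Prod>i<length h. bernoulli_prob (mixture_forecast I ep (take i h) (fst (h!i))) (snd (snd (h!i))))"
    using sp by (subst ln_prod) (auto simp: sum_negf dest: less_imp_neq[THEN not_sym])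
  also have "\<dots> = ln (real (card I)) - ln (\<Sum>L\<in>I. expert_weight ep L h)"
    using cI sum_expert_weight_pos[of h] by (simp add: prod_mixture_prob ln_div)
  also have "\<dots> \<le> ln (real (card I)) - ln (expert_weight ep L h)"
  proof -
    have "expert_weight ep L h \<le> (\<Sum>L\<in>I. expert_weight ep L h)"
      using fin L by (intro member_le_sum) (auto simp: less_imp_le[OF expert_weight_pos])
    then show ?thesis using expert_weight_pos[of L h] by simp
  qed
  also have "ln (expert_weight ep L h) = (\<Sum>i<length h. ln (bernoulli_prob (ep L (take i h) (fst (h!i))) (snd (snd (h!i)))))"
    unfolding expert_weight_def by (subst ln_prod) (auto dest: less_imp_neq[THEN not_sym] simp: bernoulli_prob_pos[THEN less_imp_neq, THEN not_sym])
  finally show ?thesis by (simp add: sum_negf)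
qed

end

lemma regret_le_ereal:
  assumes le: "\<And>f. f \<in> F \<Longrightarrow> ereal A \<le> (\<Sum>t<length h. logloss (f (fst (h!t))) (snd (snd (h!t)))) + ereal B"
    and A: "(\<Sum>t<length h. logloss (fst (snd (h!t))) (snd (snd (h!t)))) = ereal A"
  shows "regret F h \<le> ereal B"
proof -
  let ?I = "INF f\<in>F. \<Sum>t<length h. logloss (f (fst (h!t))) (snd (snd (h!t)))"
  have "ereal (A - B) \<le> ?I"
  proof (rule INF_greatest)
    fix f assume "f \<in> F"
    from le[OF this] show "ereal (A - B) \<le> (\<Sum>t<length h. logloss (f (fst (h!t))) (snd (snd (h!t))))"
      by (cases "(\<Sum>t<length h. logloss (f (fst (h!t))) (snd (snd (h!t))))") auto
  qed
  then show ?thesis unfolding regret_def A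
    by (cases ?I) auto
qed

lemma (in expert_mixture) mixture_regret_le:
  assumes forecasts: "\<And>t. t < length h \<Longrightarrow> fst (snd (h!t)) = mixture_forecast I ep (take t h) (fst (h!t))"
    and expert: "\<And>f. f \<in> F \<Longrightarrow> \<exists>L\<in>I. \<forall>t<length h.
        ereal (- ln (bernoulli_prob (ep L (take t h) (fst (h!t))) (snd (snd (h!t)))))
          \<le> ereal C + logloss (f (fst (h!t))) (snd (snd (h!t)))"
  shows "regret F h \<le> ereal (ln (real (card I)) + real (length h) * C)"
proof -
  let ?y = "\<lambda>t. snd (snd (h!t))" and ?x = "\<lambda>t. fst (h!t)"
  define A where "A = (\<Sum>t<length h. - ln (bernoulli_prob (mixture_forecast I ep (take t h) (?x t)) (?y t)))"
  have "(\<Sum>t<length h. logloss (fst (snd (h!t))) (?y t))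
      = (\<Sum>t<length h. ereal (- ln (bernoulli_prob (mixture_forecast I ep (take t h) (?x t)) (?y t))))"
  proof (rule sum.cong)
    fix t assume "t \<in> {..<length h}"
    moreover have "0 < bernoulli_prob (mixture_forecast I ep (take t h) (?x t)) (?y t)"
      using mixture_forecast_range[of "take t h" "?x t"] c unfolding bernoulli_prob_def by auto
    ultimately show "logloss (fst (snd (h!t))) (?y t)
        = ereal (- ln (bernoulli_prob (mixture_forecast I ep (take t h) (?x t)) (?y t)))"
      using forecasts by (simp add: logloss_bernoulli_prob)
  qed simp
  then have Aeq: "(\<Sum>t<length h. logloss (fst (snd (h!t))) (?y t)) = ereal A"
    unfolding A_def by (simp add: sum_ereal)
  show ?thesis
  proof (rule regret_le_ereal[OF _ Aeq])
    fix f assume "f \<in> F"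
    then obtain L where L: "L \<in> I" and close: "\<forall>t<length h.
        ereal (- ln (bernoulli_prob (ep L (take t h) (?x t)) (?y t))) \<le> ereal C + logloss (f (?x t)) (?y t)"
      using expert by blast
    have "ereal A \<le> ereal (ln (real (card I)))
        + (\<Sum>t<length h. ereal (- ln (bernoulli_prob (ep L (take t h) (?x t)) (?y t))))"
      using mixture_loss_le[OF L, of h] unfolding A_def by (simp add: sum_ereal)
    also have "\<dots> \<le> ereal (ln (real (card I))) + (\<Sum>t<length h. ereal C + logloss (f (?x t)) (?y t))"
      using close by (intro add_left_mono sum_mono) auto
    also have "\<dots> = ereal (ln (real (card I))) + (ereal (real (length h) * C) + (\<Sum>t<length h. logloss (f (?x t)) (?y t)))"
      by (simp add: sum.distrib sum_ereal[symmetric])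
    also have "\<dots> = (\<Sum>t<length h. logloss (f (?x t)) (?y t)) + ereal (ln (real (card I)) + real (length h) * C)"
      by (simp only: plus_ereal.simps(1)[symmetric] add_ac)
    finally show "ereal A \<le> (\<Sum>t<length h. logloss (f (?x t)) (?y t))
        + ereal (ln (real (card I)) + real (length h) * C)" .
  qed
qed

section \<open>The upper bound\<close>

lemma ereal_convex_comb_le:
  assumes "a \<le> ereal B" "b \<le> ereal B" "0 \<le> p" "p \<le> 1"
  shows "ereal p * a + ereal (1 - p) * b \<le> ereal B"
proof -
  have "ereal p * a \<le> ereal p * ereal B" using assms by (intro ereal_mult_left_mono) auto
  moreover have "ereal (1 - p) * b \<le> ereal (1 - p) * ereal B" using assms by (intro ereal_mult_left_mono) auto
  ultimately have "ereal p * a + ereal (1 - p) * b \<le> ereal p * ereal B + ereal (1 - p) * ereal B"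
    by (rule add_mono)
  also have "\<dots> = ereal B" by (simp add: algebra_simps)
  finally show ?thesis .
qed

lemma game_val_le_strategy:
  assumes sr: "\<And>h x. 0 \<le> \<sigma> h x \<and> \<sigma> h x \<le> 1"
    and reg: "\<And>h. length h = n \<Longrightarrow> (\<forall>i<n. fst (h!i) \<in> X \<and> fst (snd (h!i)) = \<sigma> (take i h) (fst (h!i)))
        \<Longrightarrow> regret F h \<le> ereal B"
  shows "length h0 + k = n \<Longrightarrow> (\<forall>i<length h0. fst (h0!i) \<in> X \<and> fst (snd (h0!i)) = \<sigma> (take i h0) (fst (h0!i)))
     \<Longrightarrow> game_val X F k h0 \<le> ereal B"
proof (induction k arbitrary: h0)
  case 0
  then show ?case using reg by simp
next
  case (Suc k)
  show ?case unfolding game_val.simps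
  proof (rule SUP_least)
    fix x assume x: "x \<in> X"
    let ?y = "\<sigma> h0 x"
    have cons: "game_val X F k (h0 @ [(x, ?y, y)]) \<le> ereal B" for y
    proof (rule Suc.IH)
      show "length (h0 @ [(x, ?y, y)]) + k = n" using Suc.prems by simp
      show "\<forall>i<length (h0 @ [(x, ?y, y)]). fst ((h0 @ [(x, ?y, y)])!i) \<in> X \<and>
          fst (snd ((h0 @ [(x, ?y, y)])!i)) = \<sigma> (take i (h0 @ [(x, ?y, y)])) (fst ((h0 @ [(x, ?y, y)])!i))"
        using Suc.prems(2) x by (auto simp: nth_append less_Suc_eq)
    qed
    have "(INF yh\<in>{0..1}. SUP p\<in>{0..1}. ereal p * game_val X F k (h0 @ [(x, yh, True)]) +
            ereal (1 - p) * game_val X F k (h0 @ [(x, yh, False)]))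
        \<le> (SUP p\<in>{0..1}. ereal p * game_val X F k (h0 @ [(x, ?y, True)]) +
            ereal (1 - p) * game_val X F k (h0 @ [(x, ?y, False)]))"
      by (rule INF_lower) (use sr in auto)
    also have "\<dots> \<le> ereal B"
      by (rule SUP_least) (use cons ereal_convex_comb_le in auto)
    finally show "(INF yh\<in>{0..1}. SUP p\<in>{0..1}. ereal p * game_val X F k (h0 @ [(x, yh, True)]) +
            ereal (1 - p) * game_val X F k (h0 @ [(x, yh, False)])) \<le> ereal B" .
  qed
qed

lemma bernoulli_prob_smoothed_ge:
  assumes "0 < \<gamma>" "\<gamma> < 1" "0 \<le> v" "v \<le> 1" "0 \<le> e" "e \<le> 1" "\<bar>e - v\<bar> \<le> \<gamma>/2"
  shows "(1 - \<gamma>) * bernoulli_prob v y \<le> bernoulli_prob ((1 - \<gamma>) * e + \<gamma>/2) y"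
proof -
  have d: "v \<le> e + \<gamma>/2" "e \<le> v + \<gamma>/2" using assms(7) unfolding abs_le_iff by linarith+
  show ?thesis
proof (cases y)
  case True
  have "(1 - \<gamma>) * v \<le> (1 - \<gamma>) * (e + \<gamma>/2)" using assms d by (intro mult_left_mono) auto
  also have "\<dots> \<le> (1 - \<gamma>) * e + \<gamma>/2" using assms by (simp add: algebra_simps)
  finally show ?thesis using True by (simp add: bernoulli_prob_def)
next
  case False
  have "(1 - \<gamma>) * (1 - v) \<le> (1 - \<gamma>) * (1 - e + \<gamma>/2)" using assms d by (intro mult_left_mono) auto
  also have "\<dots> \<le> 1 - ((1 - \<gamma>) * e + \<gamma>/2)" using assms by (simp add: algebra_simps)
  finally show ?thesis using False by (simp add: bernoulli_prob_def)
qed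
qed

lemma smoothed_loss_le:
  assumes "0 < \<gamma>" "\<gamma> < 1" "0 \<le> v" "v \<le> 1" "0 \<le> e" "e \<le> 1" "\<bar>e - v\<bar> \<le> \<gamma>/2"
  shows "ereal (- ln (bernoulli_prob ((1 - \<gamma>) * e + \<gamma>/2) y)) \<le> ereal (- ln (1 - \<gamma>)) + logloss v y"
proof (cases "bernoulli_prob v y = 0")
  case True then show ?thesis by (simp add: logloss_bernoulli_prob)
next
  case False
  have "0 \<le> bernoulli_prob v y" using assms unfolding bernoulli_prob_def by auto
  with False have pv: "0 < bernoulli_prob v y" by simp
  have tr: "(1 - \<gamma>) * bernoulli_prob v y \<le> bernoulli_prob ((1 - \<gamma>) * e + \<gamma>/2) y" by (rule bernoulli_prob_smoothed_ge[OF assms])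
  have pos: "0 < (1 - \<gamma>) * bernoulli_prob v y" using pv assms by simp
  have "ln ((1 - \<gamma>) * bernoulli_prob v y) \<le> ln (bernoulli_prob ((1 - \<gamma>) * e + \<gamma>/2) y)"
    using tr pos by simp
  moreover have "ln ((1 - \<gamma>) * bernoulli_prob v y) = ln (1 - \<gamma>) + ln (bernoulli_prob v y)"
    using pv assms by (simp add: ln_mult)
  ultimately show ?thesis using False by (simp add: logloss_bernoulli_prob)
qed

lemma smoothed_soa_expert:
  assumes rng: "\<forall>f\<in>F. \<forall>x\<in>X. 0 \<le> f x \<and> f x \<le> 1"
    and g: "0 < \<gamma>" "\<gamma> < 1" and fat: "fat_finite F X (\<gamma>/6)"
    and f: "f \<in> F" and xs: "set (map fst h) \<subseteq> X"
  obtains L where "set L \<subseteq> {..length h} \<times> {..nat \<lceil>1/(\<gamma>/6)\<rceil>}" "length L = fat_dim F X (\<gamma>/6)"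
    "\<And>t. t < length h \<Longrightarrow>
      ereal (- ln (bernoulli_prob ((1-\<gamma>) * soa_predict F X (\<gamma>/6) (map_of L) (map fst (take t h)) (fst (h!t)) + \<gamma>/2)
        (snd (snd (h!t))))) \<le> ereal (- ln (1 - \<gamma>)) + logloss (f (fst (h!t))) (snd (snd (h!t)))"
proof -
  have b: "0 < \<gamma>/6" using g by simp
  obtain L where L: "set L \<subseteq> {..length h} \<times> {..nat \<lceil>1/(\<gamma>/6)\<rceil>}" "length L = fat_dim F X (\<gamma>/6)"
    and close: "\<forall>t<length h. \<bar>soa_predict F X (\<gamma>/6) (map_of L) (take t (map fst h)) (map fst h ! t)
        - f (map fst h ! t)\<bar> \<le> 3 * (\<gamma>/6)"
    using soa_expert_list[OF fat b rng f xs] by auto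
  show thesis
  proof (rule that[OF L])
    fix t assume t: "t < length h"
    have "fst (h!t) \<in> X" using xs t by auto
    then have fr: "0 \<le> f (fst (h!t))" "f (fst (h!t)) \<le> 1" using rng f by auto
    have "\<bar>soa_predict F X (\<gamma>/6) (map_of L) (map fst (take t h)) (fst (h!t)) - f (fst (h!t))\<bar> \<le> \<gamma>/2"
      using close t by (simp add: take_map)
    then show "ereal (- ln (bernoulli_prob ((1-\<gamma>) * soa_predict F X (\<gamma>/6) (map_of L) (map fst (take t h)) (fst (h!t)) + \<gamma>/2)
        (snd (snd (h!t))))) \<le> ereal (- ln (1 - \<gamma>)) + logloss (f (fst (h!t))) (snd (snd (h!t)))"
      using soa_predict_range[OF b, of F X "map_of L" "map fst (take t h)" "fst (h!t)"]
      by (intro smoothed_loss_le[OF g fr]) auto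
  qed
qed

text \<open>With \<beta> = \<gamma>/6 every f is tracked by some expert to within \<gamma>/2.\<close>
lemma minimax_regret_upper_bound:
  assumes rng: "\<forall>f\<in>F. \<forall>x\<in>X. 0 \<le> f x \<and> f x \<le> 1"
    and g: "0 < \<gamma>" "\<gamma> < 1" and fat: "fat_finite F X (\<gamma>/6)"
  shows "minimax_regret X F n \<le> ereal (real (fat_dim F X (\<gamma>/6)) * ln (real ((n+1) * (nat \<lceil>1/(\<gamma>/6)\<rceil> + 1)))
            + real n * (- ln (1-\<gamma>)))"
proof -
  define \<beta> where "\<beta> = \<gamma>/6"
  define J where "J = nat \<lceil>1/\<beta>\<rceil>"
  define D0 where "D0 = fat_dim F X \<beta>"
  define I where "I = {L :: (nat\<times>nat) list. set L \<subseteq> {..n} \<times> {..J} \<and> length L = D0}"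
  define ep where "ep L h x = (1-\<gamma>) * soa_predict F X \<beta> (map_of L) (map fst h) x + \<gamma>/2"
    for L and h :: "'a hist" and x :: 'a
  have b: "\<beta> > 0" using g by (simp add: \<beta>_def)
  have fat': "fat_finite F X \<beta>" using fat by (simp add: \<beta>_def)
  have cardI: "card I = ((n+1)*(J+1))^D0" unfolding I_def
    by (subst card_lists_length_eq) (simp_all add: card_cartesian_product)
  have prr: "0 \<le> soa_predict F X \<beta> m xs x \<and> soa_predict F X \<beta> m xs x \<le> 1" for m xs x
    by (rule soa_predict_range[OF b])
  interpret M: expert_mixture I ep "\<gamma>/2"
  proof
    show "finite I" unfolding I_def by (rule finite_lists_length_eq) simp
    have "replicate D0 (0,0) \<in> I" unfolding I_def by auto
    then show "I \<noteq> {}" by auto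
    show "0 < \<gamma>/2" using g by simp
    fix L and h :: "'a hist" and x :: 'a
    have "(1-\<gamma>) * soa_predict F X \<beta> (map_of L) (map fst h) x \<le> (1-\<gamma>) * 1"
      using prr g by (intro mult_left_mono) auto
    moreover have "0 \<le> (1-\<gamma>) * soa_predict F X \<beta> (map_of L) (map fst h) x" using prr g by simp
    ultimately show "\<gamma>/2 \<le> ep L h x \<and> ep L h x \<le> 1 - \<gamma>/2" unfolding ep_def by simp
  qed
  define \<sigma> where "\<sigma> = mixture_forecast I ep"
  have reg: "regret F h \<le> ereal (ln (real (card I)) + real n * (- ln (1-\<gamma>)))"
    if len: "length h = n" and cons: "\<forall>i<n. fst (h!i) \<in> X \<and> fst (snd (h!i)) = \<sigma> (take i h) (fst (h!i))" for h
  proof -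
    have "regret F h \<le> ereal (ln (real (card I)) + real (length h) * (- ln (1-\<gamma>)))"
    proof (rule M.mixture_regret_le)
      show "fst (snd (h!t)) = mixture_forecast I ep (take t h) (fst (h!t))" if "t < length h" for t
        using cons that len by (simp add: \<sigma>_def)
      fix f assume f: "f \<in> F"
      have "set (map fst h) \<subseteq> X"
      proof
        fix z assume "z \<in> set (map fst h)"
        then obtain i where "i < length h" "z = fst (h!i)" by (auto simp: in_set_conv_nth)
        then show "z \<in> X" using cons len by auto
      qed
      then obtain L where "set L \<subseteq> {..n} \<times> {..J}" "length L = D0"
        and "\<forall>t<length h. ereal (- ln (bernoulli_prob (ep L (take t h) (fst (h!t))) (snd (snd (h!t)))))
          \<le> ereal (- ln (1 - \<gamma>)) + logloss (f (fst (h!t))) (snd (snd (h!t)))"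
        using smoothed_soa_expert[OF rng g fat f] len unfolding ep_def J_def D0_def \<beta>_def by metis
      moreover from calculation have "L \<in> I" unfolding I_def by simp
      ultimately show "\<exists>L\<in>I. \<forall>t<length h. ereal (- ln (bernoulli_prob (ep L (take t h) (fst (h!t))) (snd (snd (h!t)))))
          \<le> ereal (- ln (1 - \<gamma>)) + logloss (f (fst (h!t))) (snd (snd (h!t)))" by blast
    qed
    then show ?thesis using len by simp
  qed
  have "game_val X F n [] \<le> ereal (ln (real (card I)) + real n * (- ln (1-\<gamma>)))"
  proof (rule game_val_le_strategy[where \<sigma>=\<sigma>, OF _ reg])
    show "0 \<le> \<sigma> h x \<and> \<sigma> h x \<le> 1" for h x
      using M.mixture_forecast_range[of h x] g unfolding \<sigma>_def by auto
  qed auto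
  moreover have "ln (real (card I)) = real D0 * ln (real ((n+1)*(J+1)))"
    unfolding cardI by (simp add: ln_realpow)
  ultimately show ?thesis unfolding minimax_regret_def D0_def J_def \<beta>_def by simp
qed

section \<open>The lower bound\<close>

lemma logloss_nonneg: "0 \<le> q \<Longrightarrow> q \<le> 1 \<Longrightarrow> 0 \<le> logloss q y"
  unfolding logloss_def by auto

lemma logloss_not_minf: "logloss q y \<noteq> -\<infinity>"
  unfolding logloss_def by auto

lemma sum_not_minf: "(\<And>x. x \<in> A \<Longrightarrow> f x \<noteq> -\<infinity>) \<Longrightarrow> sum f A \<noteq> (-\<infinity>::ereal)"
  by (induction A rule: infinite_finite_induct) (auto simp: ereal_plus_eq_MInfty)

lemma entropy_le_expected_logloss:
  assumes p: "0 \<le> p" "p \<le> 1" and q: "0 \<le> q" "q \<le> 1"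
  shows "ereal (- p * ln p - (1 - p) * ln (1 - p)) \<le> ereal p * logloss q True + ereal (1 - p) * logloss q False"
proof -
  consider "p = 0" | "p = 1" | "0 < p" "p < 1" using p by linarith
  then show ?thesis
  proof cases
    case 1
    then show ?thesis using logloss_nonneg[OF q] by (simp flip: zero_ereal_def)
  next
    case 2
    then show ?thesis using logloss_nonneg[OF q] by (simp flip: zero_ereal_def)
  next
    case 3
    have n1: "0 \<le> ereal p * logloss q True" "0 \<le> ereal (1-p) * logloss q False"
      using 3 logloss_nonneg[OF q] by simp_all
    consider "q = 0" | "q = 1" | "0 < q" "q < 1" using q by linarith
    then show ?thesis
    proof cases
      case 1
      then have inf: "ereal p * logloss q True = \<infinity>" using 3 by (simp add: logloss_def)
      have s: "ereal p * logloss q True + ereal (1-p) * logloss q False = \<infinity>"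
        unfolding inf using n1(2) by (cases "ereal (1-p) * logloss q False") auto
      show ?thesis unfolding s by simp
    next
      case 2
      then have inf: "ereal (1-p) * logloss q False = \<infinity>" using 3 by (simp add: logloss_def)
      have s: "ereal p * logloss q True + ereal (1-p) * logloss q False = \<infinity>"
        unfolding inf using n1(1) by (cases "ereal p * logloss q True") auto
      show ?thesis unfolding s by simp
    next
      case q3: 3
      have e1: "ln (q / p) \<le> q / p - 1" using q3 3 by (intro ln_le_minus_one) simp
      have e2: "ln ((1-q) / (1-p)) \<le> (1-q) / (1-p) - 1" using q3 3 by (intro ln_le_minus_one) simp
      have e1': "p * (ln q - ln p) \<le> q - p"
      proof -
        have "p * ln (q / p) \<le> p * (q / p - 1)" using mult_left_mono[OF e1, of p] 3 by simp
        moreover have "p * (q / p - 1) = q - p" using 3 by (simp add: field_simps)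
        moreover have "ln (q / p) = ln q - ln p" using 3 q3 by (simp add: ln_div)
        ultimately show ?thesis by simp
      qed
      have e2': "(1-p) * (ln (1-q) - ln (1-p)) \<le> (1-q) - (1-p)"
      proof -
        have "(1-p) * ln ((1-q) / (1-p)) \<le> (1-p) * ((1-q) / (1-p) - 1)" using mult_left_mono[OF e2, of "1-p"] 3 by simp
        moreover have "(1-p) * ((1-q) / (1-p) - 1) = (1-q) - (1-p)" using 3 by (simp add: field_simps)
        moreover have "ln ((1-q) / (1-p)) = ln (1-q) - ln (1-p)" using 3 q3 by (simp add: ln_div)
        ultimately show ?thesis by simp
      qed
      have "- p * ln p - (1 - p) * ln (1 - p) \<le> p * (- ln q) + (1-p) * (- ln (1-q))"
        using e1' e2' by (simp add: algebra_simps)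
      then show ?thesis using q3 by (simp add: logloss_def)
    qed
  qed
qed

lemma entropy_shift_gap:
  fixes \<beta> s :: real
  assumes b: "0 < \<beta>" and s: "\<beta>/2 \<le> s" "s \<le> 1 - \<beta>/2"
  shows "\<beta>/2 \<le> s * (ln (s + \<beta>/2) - ln s) + (1 - s) * (ln (1 - s + \<beta>/2) - ln (1 - s))"
proof -
  define a where "a = \<beta>/2"
  have a: "0 < a" "a \<le> s" "s \<le> 1 - a" using assms by (auto simp: a_def)
  have g: "a \<le> ln (u + a) - ln u" if u: "0 < u" "u + a \<le> 1" for u
  proof -
    have "ln (u / (u + a)) \<le> u / (u + a) - 1" using u a by (intro ln_le_minus_one) simp
    also have "\<dots> = - a / (u + a)" using u a by (simp add: field_simps)
    also have "\<dots> \<le> - a"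
    proof -
      have "a \<le> a / (u + a)" using u a by (simp add: le_divide_eq)
      then show ?thesis by simp
    qed
    finally have "ln (u / (u + a)) \<le> - a" .
    moreover have "ln (u / (u + a)) = ln u - ln (u + a)" using u a by (simp add: ln_div)
    ultimately show ?thesis by simp
  qed
  have "s * a \<le> s * (ln (s + a) - ln s)" using g[of s] a by (intro mult_left_mono) auto
  moreover have "(1 - s) * a \<le> (1 - s) * (ln (1 - s + a) - ln (1 - s))" using g[of "1 - s"] a by (intro mult_left_mono) auto
  ultimately show ?thesis unfolding a_def[symmetric] by (simp add: algebra_simps)
qed

lemma expected_logloss_ge_margin:
  assumes b: "0 < \<beta>" and s: "\<beta>/2 \<le> s" "s \<le> 1 - \<beta>/2" and q: "0 \<le> q" "q \<le> 1"
  shows "ereal (s * - ln (s + \<beta>/2) + (1 - s) * - ln (1 - s + \<beta>/2) + \<beta>/2)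
    \<le> ereal s * logloss q True + ereal (1 - s) * logloss q False"
proof -
  have "s * - ln (s + \<beta>/2) + (1 - s) * - ln (1 - s + \<beta>/2) + \<beta>/2 \<le> - s * ln s - (1 - s) * ln (1 - s)"
    using entropy_shift_gap[OF b s] by (simp add: algebra_simps)
  moreover have "0 \<le> s" "s \<le> 1" using s b by linarith+
  ultimately show ?thesis using entropy_le_expected_logloss[OF _ _ q, of s]
    by (meson ereal_less_eq(3) order_trans)
qed

lemma logloss_le_margin:
  assumes b: "0 < \<beta>" and s: "\<beta>/2 \<le> s" "s \<le> 1 - \<beta>/2"
    and margin: "(if y then 1 else -1) * (v - s) \<ge> \<beta>/2"
  shows "logloss v y \<le> ereal (if y then - ln (s + \<beta>/2) else - ln (1 - s + \<beta>/2))"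
proof (cases y)
  case True
  then have "s + \<beta>/2 \<le> v" "0 < s + \<beta>/2" using margin s b by simp_all
  then show ?thesis using True by (simp add: logloss_def)
next
  case False
  then have "1 - s + \<beta>/2 \<le> 1 - v" "0 < 1 - s + \<beta>/2" using margin s b by simp_all
  then show ?thesis using False by (simp add: logloss_def)
qed

definition learner_loss :: "'a hist \<Rightarrow> ereal" where
  "learner_loss h = (\<Sum>t<length h. logloss (fst (snd (h!t))) (snd (snd (h!t))))"

definition comparator_cost :: "('a hist \<Rightarrow> real) \<Rightarrow> ('a hist \<Rightarrow> real) \<Rightarrow> 'a hist \<Rightarrow> real" where
  "comparator_cost cT cF h = (\<Sum>t<length h. if snd (snd (h!t)) then cT (take t h) else cF (take t h))"

definition adversary_consistent :: "('a hist \<Rightarrow> 'a) \<Rightarrow> ('a hist \<Rightarrow> real) \<Rightarrow> 'a hist \<Rightarrow> bool" where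
  "adversary_consistent xa pa h \<longleftrightarrow> (\<forall>t<length h. fst (h!t) = xa (take t h) \<and>
      (snd (snd (h!t)) \<longrightarrow> 0 < pa (take t h)) \<and> (\<not> snd (snd (h!t)) \<longrightarrow> pa (take t h) < 1))"

lemma learner_loss_snoc: "learner_loss (h @ [(x, yh, y)]) = learner_loss h + logloss yh y"
  unfolding learner_loss_def by (simp add: nth_append)

lemma comparator_cost_snoc: "comparator_cost cT cF (h @ [(x, yh, y)]) = comparator_cost cT cF h + (if y then cT h else cF h)"
  unfolding comparator_cost_def by (auto simp: nth_append intro!: sum.cong)

lemma adversary_consistent_snoc: "adversary_consistent xa pa h \<Longrightarrow> x = xa h \<Longrightarrow> (y \<longrightarrow> 0 < pa h) \<Longrightarrow> (\<not> y \<longrightarrow> pa h < 1)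
   \<Longrightarrow> adversary_consistent xa pa (h @ [(x, yh, y)])"
  unfolding adversary_consistent_def by (auto simp: nth_append less_Suc_eq)

lemma learner_loss_not_minf: "learner_loss h \<noteq> -\<infinity>"
  unfolding learner_loss_def by (rule sum_not_minf) (rule logloss_not_minf)

text \<open>One round of the induction in the lower bound, keeping track of infinite losses.\<close>

lemma adversary_round_ineq:
  fixes A lT lF a b :: ereal and p C cT cF K \<kappa> :: real
  assumes p: "0 \<le> p" "p \<le> 1" and A: "A \<noteq> -\<infinity>" and lT: "lT \<noteq> -\<infinity>" and lF: "lF \<noteq> -\<infinity>"
   and ha: "0 < p \<Longrightarrow> A + lT + ereal (K - C - cT) \<le> a"
   and hb: "p < 1 \<Longrightarrow> A + lF + ereal (K - C - cF) \<le> b"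
   and g: "ereal (p * cT + (1-p) * cF + \<kappa>) \<le> ereal p * lT + ereal (1-p) * lF"
  shows "A + ereal (K - C + \<kappa>) \<le> ereal p * a + ereal (1-p) * b"
proof -
  have a1: "ereal p * (A + lT + ereal (K - C - cT)) \<le> ereal p * a"
  proof (cases "p = 0")
    case True then show ?thesis by (simp flip: zero_ereal_def)
  next
    case False then show ?thesis using ha p by (intro ereal_mult_left_mono) auto
  qed
  have b1: "ereal (1-p) * (A + lF + ereal (K - C - cF)) \<le> ereal (1-p) * b"
  proof (cases "p = 1")
    case True then show ?thesis by (simp flip: zero_ereal_def)
  next
    case False then show ?thesis using hb p by (intro ereal_mult_left_mono) auto
  qed
  have main: "A + ereal (K - C + \<kappa>) \<le> ereal p * (A + lT + ereal (K - C - cT)) + ereal (1-p) * (A + lF + ereal (K - C - cF))"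
  proof (cases "p = 0")
    case True
    then have "ereal (cF + \<kappa>) \<le> lF" using g by (simp flip: zero_ereal_def)
    then show ?thesis using True A lF by (cases A; cases lF) (auto simp flip: zero_ereal_def)
  next
    case p0: False
    show ?thesis
    proof (cases "p = 1")
      case True
      then have "ereal (cT + \<kappa>) \<le> lT" using g by (simp flip: zero_ereal_def)
      then show ?thesis using True A lT by (cases A; cases lT) (auto simp flip: zero_ereal_def)
    next
      case p1: False
      have pp: "0 < p" "p < 1" using p p0 p1 by auto
      show ?thesis
      proof (cases "A = \<infinity> \<or> lT = \<infinity> \<or> lF = \<infinity>")
        case True
        have e1: "ereal p * (A + lT + ereal (K - C - cT)) \<noteq> -\<infinity>" using A lT pp
          by (cases A; cases lT) (auto simp: ereal_mult_eq_MInfty)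
        have e2: "ereal (1-p) * (A + lF + ereal (K - C - cF)) \<noteq> -\<infinity>" using A lF pp
          by (cases A; cases lF) (auto simp: ereal_mult_eq_MInfty)
        have "ereal p * (A + lT + ereal (K - C - cT)) = \<infinity> \<or> ereal (1-p) * (A + lF + ereal (K - C - cF)) = \<infinity>"
          using True A lT lF pp by (cases A; cases lT; cases lF) (auto simp: ereal_mult_eq_PInfty)
        then have inf: "ereal p * (A + lT + ereal (K - C - cT)) + ereal (1-p) * (A + lF + ereal (K - C - cF)) = \<infinity>"
          using e1 e2 by auto
        show ?thesis unfolding inf by simp
      next
        case False
        then obtain \<alpha> u w where abs: "A = ereal \<alpha>" "lT = ereal u" "lF = ereal w"
          using A lT lF by (cases A; cases lT; cases lF) auto
        have gr: "p * cT + (1-p) * cF + \<kappa> \<le> p * u + (1-p) * w" using g abs by simp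
        have "\<alpha> + (K - C + \<kappa>) \<le> p * (\<alpha> + u + (K - C - cT)) + (1-p) * (\<alpha> + w + (K - C - cF))"
          using gr by (simp add: algebra_simps)
        then show ?thesis using abs by simp
      qed
    qed
  qed
  show ?thesis using main a1 b1 by (meson add_mono order_trans)
qed

lemma game_val_ge_adversary:
  fixes xa :: "'a hist \<Rightarrow> 'a" and pa cT cF :: "'a hist \<Rightarrow> real" and \<kappa> :: real
  assumes xa: "\<And>h. xa h \<in> X" and pa: "\<And>h. 0 \<le> pa h \<and> pa h \<le> 1"
   and round_gain: "\<And>h yh. 0 \<le> yh \<Longrightarrow> yh \<le> 1 \<Longrightarrow> ereal (pa h * cT h + (1 - pa h) * cF h + \<kappa>)
        \<le> ereal (pa h) * logloss yh True + ereal (1 - pa h) * logloss yh False"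
   and fin: "\<And>h. length h = n \<Longrightarrow> adversary_consistent xa pa h \<Longrightarrow> learner_loss h + ereal (- comparator_cost cT cF h) \<le> regret F h"
  shows "length h + k = n \<Longrightarrow> adversary_consistent xa pa h \<Longrightarrow> learner_loss h + ereal (real k * \<kappa> - comparator_cost cT cF h) \<le> game_val X F k h"
proof (induction k arbitrary: h)
  case 0
  then show ?case using fin by simp
next
  case (Suc k)
  let ?x = "xa h" and ?p = "pa h"
  have "learner_loss h + ereal (real (Suc k) * \<kappa> - comparator_cost cT cF h) \<le>
     (INF yh\<in>{0..1}. SUP p\<in>{0..1}. ereal p * game_val X F k (h @ [(?x, yh, True)]) +
        ereal (1 - p) * game_val X F k (h @ [(?x, yh, False)]))"
  proof (rule INF_greatest)
    fix yh :: real assume yh: "yh \<in> {0..1}"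
    let ?a = "game_val X F k (h @ [(?x, yh, True)])" and ?b = "game_val X F k (h @ [(?x, yh, False)])"
    have ha: "learner_loss h + logloss yh True + ereal (real k * \<kappa> - comparator_cost cT cF h - cT h) \<le> ?a" if "0 < ?p"
    proof -
      have "learner_loss (h @ [(?x, yh, True)]) + ereal (real k * \<kappa> - comparator_cost cT cF (h @ [(?x, yh, True)])) \<le> ?a"
        by (rule Suc.IH) (use Suc.prems that in \<open>auto intro: adversary_consistent_snoc\<close>)
      then show ?thesis by (simp add: learner_loss_snoc comparator_cost_snoc algebra_simps)
    qed
    have hb: "learner_loss h + logloss yh False + ereal (real k * \<kappa> - comparator_cost cT cF h - cF h) \<le> ?b" if "?p < 1"
    proof -
      have "learner_loss (h @ [(?x, yh, False)]) + ereal (real k * \<kappa> - comparator_cost cT cF (h @ [(?x, yh, False)])) \<le> ?b"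
        by (rule Suc.IH) (use Suc.prems that in \<open>auto intro: adversary_consistent_snoc\<close>)
      then show ?thesis by (simp add: learner_loss_snoc comparator_cost_snoc algebra_simps)
    qed
    have li: "learner_loss h + ereal (real k * \<kappa> - comparator_cost cT cF h + \<kappa>) \<le> ereal ?p * ?a + ereal (1 - ?p) * ?b"
      by (rule adversary_round_ineq[OF _ _ learner_loss_not_minf logloss_not_minf logloss_not_minf ha hb round_gain])
        (use pa yh in auto)
    have "learner_loss h + ereal (real (Suc k) * \<kappa> - comparator_cost cT cF h) \<le> ereal ?p * ?a + ereal (1 - ?p) * ?b"
      using li by (simp add: algebra_simps)
    also have "\<dots> \<le> (SUP p\<in>{0..1}. ereal p * ?a + ereal (1 - p) * ?b)"
      by (rule SUP_upper) (use pa in auto)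
    finally show "learner_loss h + ereal (real (Suc k) * \<kappa> - comparator_cost cT cF h) \<le> (SUP p\<in>{0..1}. ereal p * ?a + ereal (1 - p) * ?b)" .
  qed
  also have "\<dots> \<le> game_val X F (Suc k) h"
    unfolding game_val.simps by (rule SUP_upper) (rule xa)
  finally show ?case .
qed

lemma regret_ge_comparator:
  assumes "f \<in> F" "(\<Sum>t<length h. logloss (f (fst (h!t))) (snd (snd (h!t)))) \<le> ereal c"
  shows "learner_loss h + ereal (- c) \<le> regret F h"
proof -
  let ?I = "INF f\<in>F. \<Sum>t<length h. logloss (f (fst (h!t))) (snd (snd (h!t)))"
  have "?I \<le> ereal c" using assms by (meson INF_lower order_trans)
  then show ?thesis unfolding regret_def learner_loss_def[symmetric] using learner_loss_not_minf[of h]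
    by (cases ?I; cases "learner_loss h") auto
qed

lemma sum_logloss_le_comparator_cost:
  assumes "\<And>t. t < length h \<Longrightarrow> logloss (f (fst (h!t))) (snd (snd (h!t))) \<le> ereal (if snd (snd (h!t)) then cT (take t h) else cF (take t h))"
  shows "(\<Sum>t<length h. logloss (f (fst (h!t))) (snd (snd (h!t)))) \<le> ereal (comparator_cost cT cF h)"
proof -
  have "(\<Sum>t<length h. logloss (f (fst (h!t))) (snd (snd (h!t))))
      \<le> (\<Sum>t<length h. ereal (if snd (snd (h!t)) then cT (take t h) else cF (take t h)))"
    by (rule sum_mono) (use assms in auto)
  also have "\<dots> = ereal (comparator_cost cT cF h)" unfolding comparator_cost_def by (simp only: sum_ereal)
  finally show ?thesis .
qed

lemma minimax_regret_nonneg: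
  fixes X :: "'a set" and F :: "('a \<Rightarrow> real) set"
  assumes x0: "x0 \<in> X" and f0: "f0 \<in> F" and rng: "\<forall>f\<in>F. \<forall>x\<in>X. 0 \<le> f x \<and> f x \<le> 1"
  shows "0 \<le> minimax_regret X F n"
proof -
  define q where "q = f0 x0"
  have q: "0 \<le> q" "q \<le> 1" using rng f0 x0 by (auto simp: q_def)
  define cT :: "'a hist \<Rightarrow> real" where "cT = (\<lambda>_. - ln q)"
  define cF :: "'a hist \<Rightarrow> real" where "cF = (\<lambda>_. - ln (1 - q))"
  have "learner_loss ([] :: 'a hist) + ereal (real n * 0 - comparator_cost cT cF []) \<le> game_val X F n []"
  proof (rule game_val_ge_adversary[where xa="\<lambda>_. x0" and pa="\<lambda>_. q" and cT=cT and cF=cF and \<kappa>=0 and n=n and k=n and h="[]"])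
    show "\<And>h. x0 \<in> X" by (fact x0)
    show "\<And>h. 0 \<le> q \<and> q \<le> 1" using q by simp
    fix h :: "'a hist" and yh :: real assume yh: "0 \<le> yh" "yh \<le> 1"
    have "q * cT h + (1 - q) * cF h + 0 = - q * ln q - (1 - q) * ln (1 - q)" unfolding cT_def cF_def by simp
    then show "ereal (q * cT h + (1 - q) * cF h + 0) \<le> ereal q * logloss yh True + ereal (1 - q) * logloss yh False"
      using entropy_le_expected_logloss[OF q yh] by simp
  next
    fix h :: "'a hist" assume len: "length h = n" and r: "adversary_consistent (\<lambda>_. x0) (\<lambda>_. q) h"
    show "learner_loss h + ereal (- comparator_cost cT cF h) \<le> regret F h"
    proof (rule regret_ge_comparator[OF f0 sum_logloss_le_comparator_cost])
      fix t assume t: "t < length h"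
      have xt: "fst (h!t) = x0" and yq: "snd (snd (h!t)) \<longrightarrow> 0 < q" "\<not> snd (snd (h!t)) \<longrightarrow> q < 1"
        using r t unfolding adversary_consistent_def by auto
      show "logloss (f0 (fst (h!t))) (snd (snd (h!t))) \<le> ereal (if snd (snd (h!t)) then cT (take t h) else cF (take t h))"
        using yq unfolding xt q_def[symmetric] cT_def cF_def by (auto simp: logloss_def)
    qed
  qed (simp_all add: adversary_consistent_def)
  then show ?thesis unfolding minimax_regret_def by (simp add: learner_loss_def comparator_cost_def zero_ereal_def)
qed

lemma minimax_regret_ge_shattered:
  assumes x0: "x0 \<in> X" and rng: "\<forall>f\<in>F. \<forall>x\<in>X. 0 \<le> f x \<and> f x \<le> 1"
    and b: "0 < \<beta>" and sh: "seq_shatters F X \<beta> d" and nd: "n \<le> d"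
  shows "ereal (real n * (\<beta>/2)) \<le> minimax_regret X F n"
proof -
  from sh obtain xt st where XT: "\<forall>ys. length ys < d \<longrightarrow> xt ys \<in> X"
    and ST: "\<forall>y. length y = d \<longrightarrow>
           (\<exists>f\<in>F. \<forall>t<d. (if y ! t then 1 else -1) * (f (xt (take t y)) - st (take t y)) \<ge> \<beta> / 2)"
    unfolding seq_shatters_def by blast
  note node = seq_shatters_witness_bounds[OF rng XT ST]
  show ?thesis
  proof (cases "n = 0")
    case True
    have "F \<noteq> {}" using sh seq_shatters_empty by auto
    then obtain f0 where "f0 \<in> F" by blast
    then show ?thesis using minimax_regret_nonneg[OF x0 _ rng] True by (simp add: zero_ereal_def)
  next
    case False
    then have d0: "0 < d" using nd by simp
    have b1: "\<beta> \<le> 1" using node[of "[]"] d0 by simp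
    define ysh :: "'a hist \<Rightarrow> bool list" where "ysh h = map (snd \<circ> snd) h" for h
    define pa :: "'a hist \<Rightarrow> real" where "pa h = (if length h < n then st (ysh h) else 1/2)" for h
    define xa :: "'a hist \<Rightarrow> 'a" where "xa h = (if length h < n then xt (ysh h) else x0)" for h
    define cT :: "'a hist \<Rightarrow> real" where "cT h = - ln (pa h + \<beta>/2)" for h
    define cF :: "'a hist \<Rightarrow> real" where "cF h = - ln (1 - pa h + \<beta>/2)" for h
    have par: "\<beta>/2 \<le> pa h \<and> pa h \<le> 1 - \<beta>/2" for h
      using node[of "ysh h"] nd b1 unfolding pa_def ysh_def by auto
    have "learner_loss ([] :: 'a hist) + ereal (real n * (\<beta>/2) - comparator_cost cT cF []) \<le> game_val X F n []"
    proof (rule game_val_ge_adversary[where xa=xa and pa=pa and cT=cT and cF=cF and \<kappa>="\<beta>/2" and n=n and k=n and h="[]"])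
      show "xa h \<in> X" for h using XT nd x0 unfolding xa_def ysh_def by auto
      show "0 \<le> pa h \<and> pa h \<le> 1" for h using par[of h] b by auto
      show "ereal (pa h * cT h + (1 - pa h) * cF h + \<beta>/2)
          \<le> ereal (pa h) * logloss yh True + ereal (1 - pa h) * logloss yh False"
        if "0 \<le> yh" "yh \<le> 1" for h yh
        unfolding cT_def cF_def using expected_logloss_ge_margin[OF b _ _ that] par[of h] by simp
    next
      fix h :: "'a hist" assume len: "length h = n" and r: "adversary_consistent xa pa h"
      define yy where "yy = ysh h @ replicate (d - n) False"
      have lyy: "length yy = d" using len nd by (simp add: yy_def ysh_def)
      obtain f where f: "f \<in> F" "\<forall>t<d. (if yy ! t then 1 else -1) * (f (xt (take t yy)) - st (take t yy)) \<ge> \<beta> / 2"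
        using ST lyy by blast
      show "learner_loss h + ereal (- comparator_cost cT cF h) \<le> regret F h"
      proof (rule regret_ge_comparator[OF f(1) sum_logloss_le_comparator_cost])
        fix t assume t: "t < length h"
        have tn: "t < n" using t len by simp
        have tk: "take t yy = ysh (take t h)" using t unfolding yy_def ysh_def by (simp add: take_map)
        have yt: "yy ! t = snd (snd (h!t))" using t unfolding yy_def ysh_def by (simp add: nth_append)
        have lt: "length (take t h) < n" using tn t by simp
        have xh: "fst (h!t) = xt (take t yy)" using r t lt unfolding adversary_consistent_def xa_def tk by auto
        have ph: "pa (take t h) = st (take t yy)" using lt unfolding pa_def tk by simp
        have ft: "(if yy ! t then 1 else -1) * (f (xt (take t yy)) - st (take t yy)) \<ge> \<beta> / 2"
          using f(2) tn nd by simp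
        have "(if snd (snd (h!t)) then 1 else -1) * (f (fst (h!t)) - pa (take t h)) \<ge> \<beta> / 2"
          using ft yt xh ph by simp
        then show "logloss (f (fst (h!t))) (snd (snd (h!t)))
            \<le> ereal (if snd (snd (h!t)) then cT (take t h) else cF (take t h))"
          unfolding cT_def cF_def
          by (rule logloss_le_margin[OF b par[of "take t h", THEN conjunct1] par[of "take t h", THEN conjunct2]])
      qed
    qed (simp_all add: adversary_consistent_def)
    then show ?thesis unfolding minimax_regret_def by (simp add: learner_loss_def comparator_cost_def)
  qed
qed

section \<open>Sublinear regret\<close>

lemma ereal_le_divide_nat:
  assumes "ereal (real n * c) \<le> V" "0 < n"
  shows "ereal c \<le> V / ereal (real n)"
proof (cases V)
  case (real r)
  then have "real n * c \<le> r" using assms by simp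
  then have "c \<le> r / real n" using assms by (simp add: le_divide_eq mult.commute)
  then show ?thesis using real assms by simp
next
  case PInf then show ?thesis using assms by simp
next
  case MInf then show ?thesis using assms by simp
qed

lemma ereal_divide_nat_le:
  assumes "V \<le> ereal U" "0 < n"
  shows "V / ereal (real n) \<le> ereal (U / real n)"
proof (cases V)
  case (real r)
  then have "r \<le> U" using assms by simp
  then have "r / real n \<le> U / real n" using assms by (simp add: divide_right_mono)
  then show ?thesis using real assms by simp
next
  case PInf then show ?thesis using assms by simp
next
  case MInf then show ?thesis using assms by simp
qed

lemma ereal_divide_nat_nonneg:
  assumes "0 \<le> V" "0 < n"
  shows "0 \<le> V / ereal (real n)"
  using ereal_le_divide_nat[of n 0 V] assms by (simp add: zero_ereal_def)

lemma minus_ln_one_minus_le: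
  fixes \<gamma> :: real
  assumes "0 < \<gamma>" "\<gamma> \<le> 1/2"
  shows "- ln (1 - \<gamma>) \<le> 2 * \<gamma>"
proof -
  have "ln (1 / (1 - \<gamma>)) \<le> 1 / (1 - \<gamma>) - 1" using assms by (intro ln_le_minus_one) simp
  also have "\<dots> = \<gamma> / (1 - \<gamma>)" using assms by (simp add: field_simps)
  also have "\<dots> \<le> 2 * \<gamma>" using assms by (simp add: field_simps)
  finally show ?thesis using assms by (simp add: ln_div)
qed

lemma tendsto_ln_linear_div:
  fixes D J :: real
  shows "((\<lambda>n::nat. D * ln (real ((n+1) * k)) / real n) \<longlongrightarrow> 0) sequentially"
proof (cases "k = 0")
  case True then show ?thesis by simp
next
  case False
  have eq: "D * ln (real ((n+1) * k)) / real n = D * (ln (real n + 1) / real n) + D * ln (real k) * (1 / real n)" for n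
  proof -
    have "real ((n+1) * k) = (real n + 1) * real k" by (simp add: algebra_simps)
    then have "ln (real ((n+1) * k)) = ln ((real n + 1) * real k)" by (simp only:)
    also have "\<dots> = ln (real n + 1) + ln (real k)" using False by (intro ln_mult_pos) auto
    finally have "ln (real ((n+1) * k)) = ln (real n + 1) + ln (real k)" .
    then show ?thesis by (simp add: add_divide_distrib distrib_left)
  qed
  have l1: "((\<lambda>n::nat. ln (real n + 1) / real n) \<longlongrightarrow> 0) sequentially" by real_asymp
  have l2: "((\<lambda>n::nat. 1 / real n) \<longlongrightarrow> 0) sequentially" by real_asymp
  have "((\<lambda>n::nat. D * (ln (real n + 1) / real n) + D * ln (real k) * (1 / real n)) \<longlongrightarrow> D * 0 + D * ln (real k) * 0) sequentially"
    by (intro tendsto_intros l1 l2)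
  then show ?thesis unfolding eq by simp
qed

lemma fat_finite_if_sublinear:
  assumes x0: "x0 \<in> X" and rng: "\<forall>f\<in>F. \<forall>x\<in>X. 0 \<le> f x \<and> f x \<le> 1" and b: "0 < \<beta>"
    and lim: "((\<lambda>n. minimax_regret X F n / ereal (real n)) \<longlongrightarrow> 0) sequentially"
  shows "fat_finite F X \<beta>"
proof (rule ccontr)
  assume nf: "\<not> fat_finite F X \<beta>"
  have big: "ereal (\<beta>/2) \<le> minimax_regret X F n / ereal (real n)" if n: "0 < n" for n
  proof -
    from nf obtain d where "seq_shatters F X \<beta> d" "\<not> d \<le> n" unfolding fat_finite_def by blast
    then have "ereal (real n * (\<beta>/2)) \<le> minimax_regret X F n"
      by (intro minimax_regret_ge_shattered[OF x0 rng b, of d]) auto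
    then show ?thesis using n by (rule ereal_le_divide_nat)
  qed
  have "\<forall>\<^sub>F n in sequentially. minimax_regret X F n / ereal (real n) < ereal (\<beta>/2)"
    using lim b by (intro order_tendstoD(2)) (auto simp: zero_ereal_def)
  moreover have "\<forall>\<^sub>F n in sequentially. (0::nat) < n" by (rule eventually_gt_at_top)
  ultimately have "\<forall>\<^sub>F n in sequentially. False"
    by eventually_elim (use big in \<open>meson linorder_not_less\<close>)
  then show False by simp
qed

text \<open>Choosing \<gamma> \<le> \<epsilon>/4 in the upper bound, the per-round cost -ln(1-\<gamma>) is at most \<epsilon>/2
  and the logarithmic term is eventually below \<epsilon>/2 after division by n.\<close>
lemma minimax_regret_eventually_less:
  assumes rng: "\<forall>f\<in>F. \<forall>x\<in>X. 0 \<le> f x \<and> f x \<le> 1"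
    and fat: "\<forall>\<beta>>0. fat_finite F X \<beta>" and e: "0 < \<epsilon>"
  shows "\<forall>\<^sub>F n in sequentially. minimax_regret X F n / ereal (real n) < ereal \<epsilon>"
proof -
  define \<gamma> where "\<gamma> = min (1/2) (\<epsilon>/4)"
  have g: "0 < \<gamma>" "\<gamma> < 1" "\<gamma> \<le> 1/2" "\<gamma> \<le> \<epsilon>/4" using e by (auto simp: \<gamma>_def)
  define D where "D = real (fat_dim F X (\<gamma>/6))"
  define k where "k = nat \<lceil>1/(\<gamma>/6)\<rceil> + 1"
  have ub: "minimax_regret X F n \<le> ereal (D * ln (real ((n+1) * k)) + real n * (- ln (1-\<gamma>)))" for n
    unfolding D_def k_def by (rule minimax_regret_upper_bound[OF rng g(1,2)]) (use fat g in simp)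
  have ml: "- ln (1 - \<gamma>) \<le> \<epsilon>/2" using minus_ln_one_minus_le[OF g(1,3)] g(4) by simp
  have "\<forall>\<^sub>F n in sequentially. D * ln (real ((n+1) * k)) / real n < \<epsilon>/2"
    using tendsto_ln_linear_div[of D k] e by (intro order_tendstoD(2)) auto
  moreover have "\<forall>\<^sub>F n in sequentially. (0::nat) < n" by (rule eventually_gt_at_top)
  ultimately show ?thesis
  proof eventually_elim
    case (elim n)
    have "minimax_regret X F n / ereal (real n)
        \<le> ereal ((D * ln (real ((n+1) * k)) + real n * (- ln (1-\<gamma>))) / real n)"
      by (rule ereal_divide_nat_le[OF ub elim(2)])
    also have "(D * ln (real ((n+1) * k)) + real n * (- ln (1-\<gamma>))) / real n
        = D * ln (real ((n+1) * k)) / real n + (- ln (1-\<gamma>))"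
      using elim(2) by (simp add: add_divide_distrib diff_divide_distrib)
    also have "\<dots> < \<epsilon>" using elim(1) ml by linarith
    finally show ?case by simp
  qed
qed

lemma sublinear_if_fat_finite:
  assumes x0: "x0 \<in> X" and f0: "f0 \<in> F" and rng: "\<forall>f\<in>F. \<forall>x\<in>X. 0 \<le> f x \<and> f x \<le> 1"
    and fat: "\<forall>\<beta>>0. fat_finite F X \<beta>"
  shows "((\<lambda>n. minimax_regret X F n / ereal (real n)) \<longlongrightarrow> 0) sequentially"
proof (rule order_tendstoI)
  fix a :: ereal assume a: "a < 0"
  have "\<forall>\<^sub>F n in sequentially. (0::nat) < n" by (rule eventually_gt_at_top)
  then show "\<forall>\<^sub>F n in sequentially. a < minimax_regret X F n / ereal (real n)"
    by eventually_elim
      (use a ereal_divide_nat_nonneg[OF minimax_regret_nonneg[OF x0 f0 rng]] in \<open>meson order_less_le_trans\<close>)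
next
  fix a :: ereal assume "0 < a"
  then obtain \<epsilon> where e: "0 < ereal \<epsilon>" "ereal \<epsilon> < a" using ereal_dense2 by blast
  have "\<forall>\<^sub>F n in sequentially. minimax_regret X F n / ereal (real n) < ereal \<epsilon>"
    using e by (intro minimax_regret_eventually_less[OF rng fat]) simp
  then show "\<forall>\<^sub>F n in sequentially. minimax_regret X F n / ereal (real n) < a"
    by eventually_elim (use e in \<open>meson order_less_trans\<close>)
qed

theorem theorem3:
  fixes X :: "'a set" and F :: "('a \<Rightarrow> real) set"
  assumes "X \<noteq> {}" and "F \<noteq> {}"
    and "\<forall>f\<in>F. \<forall>x\<in>X. 0 \<le> f x \<and> f x \<le> 1"
  shows "((\<lambda>n. minimax_regret X F n / ereal (real n)) \<longlongrightarrow> 0) sequentially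
         \<longleftrightarrow> (\<forall>\<beta>>0. fat_finite F X \<beta>)"
proof -
  obtain x0 f0 where "x0 \<in> X" "f0 \<in> F" using assms(1,2) by blast
  then show ?thesis
    using fat_finite_if_sublinear sublinear_if_fat_finite assms(3) by metis
qed

end
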